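(* Let $T$ be a measure-preserving automorphism of a Lebesgue space $(X,p)$ having a binomial generator. Then there is a central measure $\mu$ on $\mathcal T(\mathrm{OP})$ such that the adic transformation $\mathcal A$ on $(\mathcal T(\mathrm{OP}),\mu)$ is metrically isomorphic to the transformation $T\times\mathbb O$ on $(X\times I^{\mathbb N},p\times m)$.
   Context: Let $I=\{0,1\}$. The graded graph $\mathrm{OP}$ has vertex sets $\mathrm{OP}_0=I$, $\mathrm{OP}_{n+1}=\mathrm{OP}_n\times\mathrm{OP}_n$; for $v=(v_0,v_1)\in\mathrm{OP}_{n+1}$ there is an edge of index $0$ from $v_0$ to $v$ and an edge of index $1$ from $v_1$ to $v$ (two distinct edges if $v_0=v_1$), and no other edges. $\mathcal T(\mathrm{OP})$ is the compact space of infinite paths $(v_0,e_0,v_1,e_1,\dots)$ starting at floor $0$ (topology generated by cylinder sets). The adic transformation $\mathcal A$ is defined on paths having an edge of index $0$: if $e_n$ is the first such edge of $x$, then $\mathcal Ax$ coincides with $x$ from floor $n+1$ on, its edge from floor $n$ to floor $n+1$ has index $1$, and its edges below floor $n$ all have index $0$. A central measure is a Borel probability measure on $\mathcal T(\mathrm{OP})$ such that, for each $n$, conditionally on the part of a path above floor $n$, all initial segments up to floor $n$ compatible with it are equiprobable (equivalently, a Borel probability measure invariant under $\mathcal A$). A binomial generator of $T$ is a measurable partition of $X$ into two sets whose images under all $T^k$, $k\in\mathbb Z$, generate the sigma-algebra mod 0. $I^{\mathbb N}$ is the space of $0$–$1$ sequences $(\alpha_i)_{i\ge1}$, $m$ is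 the uniform Bernoulli (Lebesgue) measure on it, and $\mathbb O$ is the odometer: if $\alpha_1=\dots=\alpha_{n-1}=1$, $\alpha_n=0$, then $\mathbb O[\alpha]_i=0$ for $i<n$, $\mathbb O[\alpha]_n=1$, $\mathbb O[\alpha]_i=\alpha_i$ for $i>n$ (defined $m$-a.e.). *)

theory Defs
  imports "HOL-Probability.Probability"
begin

text \<open>A vertex of floor n of OP is encoded as a 0-1 list of length 2^n:
  OP_0 = I (lists of length 1), and the pair (v0,v1) in OP_(n+1) = OP_n x OP_n
  is encoded as the concatenation v0 @ v1.  An edge of index i (False = 0,
  True = 1) from floor n to a vertex v of floor n+1 starts at the i-th
  component of v.  A path (v_0,e_0,v_1,e_1,...) is encoded by the pair of
  its vertex sequence and its edge-index sequence (an edge is determined by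
  its index and its upper end).\<close>

type_synonym op_path = "(nat \<Rightarrow> bool list) \<times> (nat \<Rightarrow> bool)"

definition OP_vertex :: "nat \<Rightarrow> bool list \<Rightarrow> bool" where
  "OP_vertex n w \<longleftrightarrow> length w = 2 ^ n"

definition OP_component :: "bool \<Rightarrow> nat \<Rightarrow> bool list \<Rightarrow> bool list" where
  "OP_component i n w = (if i then drop (2 ^ n) w else take (2 ^ n) w)"

definition OP_paths :: "op_path set" where
  "OP_paths = {x. \<forall>n. OP_vertex n (fst x n) \<and>
                      fst x n = OP_component (snd x n) n (fst x (Suc n))}"

definition OP_cyl_gen :: "op_path set set" where
  "OP_cyl_gen = (\<Union>k. \<Union>w. {OP_paths \<inter> {x. fst x k = w}}) \<union>
                (\<Union>k. \<Union>b. {OP_paths \<inter> {x. snd x k = b}})"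

definition TOP :: "op_path measure" where
  "TOP = sigma OP_paths OP_cyl_gen"

text \<open>The adic transformation (set to the identity on the null set of paths
  without any edge of index 0, where it is undefined).\<close>
definition adic :: "op_path \<Rightarrow> op_path" where
  "adic x = (if \<exists>n. \<not> snd x n then
     (let n = LEAST n. \<not> snd x n in
       (\<lambda>k. if k \<le> n then take (2 ^ k) (drop (2 ^ n) (fst x (Suc n))) else fst x k,
        \<lambda>k. if k < n then False else if k = n then True else snd x k))
   else x)"

text \<open>Replacing the initial segment (up to floor n) of a path by the one with
  edge indices c_0..c_(n-1) ending at the same vertex at floor n.\<close>
definition OP_offset :: "bool list \<Rightarrow> nat \<Rightarrow> nat \<Rightarrow> nat" where
  "OP_offset c k n = (\<Sum>j\<in>{k..<n}. if c ! j then 2 ^ j else 0)"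

definition OP_replace :: "nat \<Rightarrow> bool list \<Rightarrow> op_path \<Rightarrow> op_path" where
  "OP_replace n c x =
     (\<lambda>k. if k < n then take (2 ^ k) (drop (OP_offset c k n) (fst x n)) else fst x k,
      \<lambda>k. if k < n then c ! k else snd x k)"

definition OP_swap :: "nat \<Rightarrow> bool list \<Rightarrow> bool list \<Rightarrow> op_path \<Rightarrow> op_path" where
  "OP_swap n a b x =
     (if map (snd x) [0..<n] = a then OP_replace n b x
      else if map (snd x) [0..<n] = b then OP_replace n a x
      else x)"

text \<open>Central measure: a Borel probability measure on T(OP) such that, for each
  n, conditionally on the part of a path above floor n, all initial segments
  up to floor n are equiprobable; equivalently, the measure is invariant
  under every exchange of two initial segments up to floor n.\<close>
definition central_measure :: "op_path measure \<Rightarrow> bool" where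
  "central_measure \<mu> \<longleftrightarrow> prob_space \<mu> \<and> sets \<mu> = sets TOP \<and>
     (\<forall>n a b. length a = n \<and> length b = n \<longrightarrow>
        OP_swap n a b \<in> \<mu> \<rightarrow>\<^sub>M \<mu> \<and> distr \<mu> \<mu> (OP_swap n a b) = \<mu>)"

definition measure_preserving_map :: "'a measure \<Rightarrow> 'b measure \<Rightarrow> ('a \<Rightarrow> 'b) \<Rightarrow> bool" where
  "measure_preserving_map M N f \<longleftrightarrow> f \<in> M \<rightarrow>\<^sub>M N \<and> distr M N f = N"

definition mp_automorphism :: "'a measure \<Rightarrow> ('a \<Rightarrow> 'a) \<Rightarrow> bool" where
  "mp_automorphism M T \<longleftrightarrow> measure_preserving_map M M T \<and>
     (\<exists>T'. measure_preserving_map M M T' \<and>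
        (AE x in M. T' (T x) = x) \<and> (AE x in M. T (T' x) = x))"

text \<open>P and its complement form a binomial generator: the sets T^k P, k in Z,
  generate the sigma-algebra mod 0.  Here T' is an inverse of T (mod 0), so the
  sets T^k P for k \<le> 0 are the preimages under T^j and for k \<ge> 0 the
  preimages under T'^j.\<close>
definition binomial_generator :: "'a measure \<Rightarrow> ('a \<Rightarrow> 'a) \<Rightarrow> 'a set \<Rightarrow> bool" where
  "binomial_generator M T P \<longleftrightarrow> P \<in> sets M \<and>
     (\<exists>T'. measure_preserving_map M M T' \<and>
        (AE x in M. T' (T x) = x) \<and> (AE x in M. T (T' x) = x) \<and>
        (\<forall>B\<in>sets M. \<exists>C\<in>sigma_sets (space M)
              ((\<Union>j. {{x\<in>space M. (T ^^ j) x \<in> P}}) \<union> (\<Union>j. {{x\<in>space M. (T' ^^ j) x \<in> P}})).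
            emeasure M ((B - C) \<union> (C - B)) = 0))"

definition metrically_isomorphic ::
  "'a measure \<Rightarrow> ('a \<Rightarrow> 'a) \<Rightarrow> 'b measure \<Rightarrow> ('b \<Rightarrow> 'b) \<Rightarrow> bool" where
  "metrically_isomorphic M S N T \<longleftrightarrow>
     (\<exists>\<phi> \<psi> A B. A \<in> sets M \<and> B \<in> sets N \<and>
        emeasure M (space M - A) = 0 \<and> emeasure N (space N - B) = 0 \<and>
        measure_preserving_map M N \<phi> \<and> measure_preserving_map N M \<psi> \<and>
        (\<forall>x\<in>A. \<phi> x \<in> B \<and> \<psi> (\<phi> x) = x \<and> \<phi> (S x) = T (\<phi> x)) \<and>
        (\<forall>y\<in>B. \<psi> y \<in> A \<and> \<phi> (\<psi> y) = y))"

text \<open>Uniform Bernoulli measure m on 0-1 sequences (indexed from 0 here).\<close>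
definition bernoulli_seq :: "(nat \<Rightarrow> bool) measure" where
  "bernoulli_seq = PiM UNIV (\<lambda>_. measure_pmf (bernoulli_pmf (1/2)))"

definition odometer :: "(nat \<Rightarrow> bool) \<Rightarrow> (nat \<Rightarrow> bool)" where
  "odometer \<alpha> = (if \<exists>n. \<not> \<alpha> n then
     (let n = LEAST n. \<not> \<alpha> n in (\<lambda>i. if i < n then False else if i = n then True else \<alpha> i))
   else \<alpha>)"

end

theory Submission
  imports Defs "HOL-Combinatorics.Transposition"
begin

text \<open>Encode a pair (x, \<alpha>) as the path whose edge indices are the digits of \<alpha> and
  whose vertex at floor n is the word of P-names of T^j x for j in the window
  [-r, 2^n - r), where r = \<Sum>j<n. \<alpha>_j 2^j. Incrementing \<alpha> by the odometer adds one to
  every r beyond the first zero of \<alpha>, which shifts all windows by one, i.e. replaces x by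
  T x: so the encoding conjugates T \<times> odometer to the adic transformation. Exchanging
  two initial segments of length n changes the first n digits of \<alpha> and shifts the
  window by some d depending only on those digits, i.e. corresponds to
  (x, \<alpha>) \<mapsto> (T^d x, \<alpha>'), which preserves p \<times> m; hence the image measure is central.
  The encoding is injective almost everywhere because the P-names determine x (P is
  a generator, and a point of a Polish space is a measurable function of the balls
  containing it) and almost every \<alpha> has infinitely many zeros and ones, so that every
  position of the name is eventually read off the path.\<close>

lemma measurable_count_space_compose:
  "f \<in> M \<rightarrow>\<^sub>M count_space UNIV \<Longrightarrow> (\<lambda>x. g (f x)) \<in> M \<rightarrow>\<^sub>M count_space UNIV"
  by (rule measurable_compose[OF _ measurable_count_space])

lemma measurable_count_space_Pair:
  fixes f :: "'a \<Rightarrow> 'b::countable" and g :: "'a \<Rightarrow> 'c::countable"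
  assumes "f \<in> M \<rightarrow>\<^sub>M count_space UNIV" "g \<in> M \<rightarrow>\<^sub>M count_space UNIV"
  shows "(\<lambda>x. (f x, g x)) \<in> M \<rightarrow>\<^sub>M count_space UNIV"
  using measurable_compose_countable[where f="\<lambda>i x. (i, g x)",
      OF measurable_count_space_compose[OF assms(2)] assms(1)] .

lemma measurable_count_space_map:
  fixes f :: "nat \<Rightarrow> 'a \<Rightarrow> 'b::countable"
  assumes "\<And>i. f i \<in> M \<rightarrow>\<^sub>M count_space UNIV"
  shows "(\<lambda>x. map (\<lambda>i. f i x) xs) \<in> M \<rightarrow>\<^sub>M count_space UNIV"
proof (induction xs)
  case (Cons a xs)
  from measurable_count_space_compose[OF measurable_count_space_Pair[OF assms Cons],
      of "\<lambda>(u, v). u # v"]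
  show ?case by simp
qed simp

lemma OP_cyl_gen_subset: "OP_cyl_gen \<subseteq> Pow OP_paths"
  unfolding OP_cyl_gen_def by auto

lemma space_TOP [simp]: "space TOP = OP_paths"
  unfolding TOP_def using OP_cyl_gen_subset by (simp add: space_measure_of)

lemma sets_TOP: "sets TOP = sigma_sets OP_paths OP_cyl_gen"
  unfolding TOP_def using OP_cyl_gen_subset by (simp add: sets_measure_of)

lemma OP_pathsD:
  assumes "y \<in> OP_paths"
  shows "length (fst y k) = 2 ^ k" "fst y k = OP_component (snd y k) k (fst y (Suc k))"
proof -
  from assms have "OP_vertex k (fst y k) \<and> fst y k = OP_component (snd y k) k (fst y (Suc k))"
    unfolding OP_paths_def by blast
  then show "length (fst y k) = 2 ^ k" "fst y k = OP_component (snd y k) k (fst y (Suc k))"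
    unfolding OP_vertex_def by blast+
qed

lemma measurable_vertex_TOP [measurable]: "(\<lambda>x. fst x k) \<in> TOP \<rightarrow>\<^sub>M count_space UNIV"
proof -
  have "OP_paths \<inter> {x. fst x k = w} \<in> sets TOP" for w
    unfolding sets_TOP OP_cyl_gen_def by (rule sigma_sets.Basic) blast
  moreover have "(\<lambda>x. fst x k) -` {w} \<inter> space TOP = OP_paths \<inter> {x. fst x k = w}" for w
    by auto
  ultimately show ?thesis
    unfolding measurable_count_space_eq2_countable by simp
qed

lemma measurable_edge_TOP [measurable]: "(\<lambda>x. snd x k) \<in> TOP \<rightarrow>\<^sub>M count_space UNIV"
proof -
  have "OP_paths \<inter> {x. snd x k = b} \<in> sets TOP" for b
    unfolding sets_TOP OP_cyl_gen_def by (rule sigma_sets.Basic) blast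
  moreover have "(\<lambda>x. snd x k) -` {b} \<inter> space TOP = OP_paths \<inter> {x. snd x k = b}" for b
    by auto
  ultimately show ?thesis
    unfolding measurable_count_space_eq2_countable by simp
qed

lemma measurable_TOPI:
  assumes "\<And>x. x \<in> space M \<Longrightarrow> f x \<in> OP_paths"
    and "\<And>k. (\<lambda>x. fst (f x) k) \<in> M \<rightarrow>\<^sub>M count_space UNIV"
    and "\<And>k. (\<lambda>x. snd (f x) k) \<in> M \<rightarrow>\<^sub>M count_space UNIV"
  shows "f \<in> M \<rightarrow>\<^sub>M TOP"
  unfolding TOP_def
proof (rule measurable_measure_of)
  show "f \<in> space M \<rightarrow> OP_paths" using assms(1) by auto
  show "OP_cyl_gen \<subseteq> Pow OP_paths" by (rule OP_cyl_gen_subset)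
  fix A assume "A \<in> OP_cyl_gen"
  then consider k w where "A = OP_paths \<inter> {x. fst x k = w}"
    | k b where "A = OP_paths \<inter> {x. snd x k = b}"
    unfolding OP_cyl_gen_def by blast
  then show "f -` A \<inter> space M \<in> sets M"
  proof cases
    case 1
    then have "f -` A \<inter> space M = (\<lambda>x. fst (f x) k) -` {w} \<inter> space M" using assms(1) by auto
    then show ?thesis using measurable_sets[OF assms(2)] by simp
  next
    case 2
    then have "f -` A \<inter> space M = (\<lambda>x. snd (f x) k) -` {b} \<inter> space M" using assms(1) by auto
    then show ?thesis using measurable_sets[OF assms(3)] by simp
  qed
qed

lemma fixpoints_in_sets_TOP:
  assumes f: "f \<in> TOP \<rightarrow>\<^sub>M TOP"
  shows "{y \<in> OP_paths. f y = y} \<in> sets TOP"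
proof -
  have "Measurable.pred TOP (\<lambda>y. fst (f y) k = fst y k)" "Measurable.pred TOP (\<lambda>y. snd (f y) k = snd y k)" for k
    using measurable_count_space_compose[OF measurable_count_space_Pair[OF
          measurable_compose[OF f measurable_vertex_TOP] measurable_vertex_TOP], of "\<lambda>(u, v). u = v"]
      measurable_count_space_compose[OF measurable_count_space_Pair[OF
          measurable_compose[OF f measurable_edge_TOP] measurable_edge_TOP], of "\<lambda>(u, v). u = v"]
    by simp_all
  then have "{y \<in> space TOP. \<forall>k. fst (f y) k = fst y k \<and> snd (f y) k = snd y k} \<in> sets TOP"
    by measurable
  moreover have "{y \<in> OP_paths. f y = y} = {y \<in> space TOP. \<forall>k. fst (f y) k = fst y k \<and> snd (f y) k = snd y k}"
    by (auto simp: prod_eq_iff fun_eq_iff)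
  ultimately show ?thesis by simp
qed

definition bin_value :: "nat \<Rightarrow> (nat \<Rightarrow> bool) \<Rightarrow> nat" where
  "bin_value n \<beta> = (\<Sum>j\<in>{0..<n}. if \<beta> j then 2 ^ j else 0)"

lemma bin_value_split:
  "k \<le> n \<Longrightarrow> bin_value n \<beta> = bin_value k \<beta> + (\<Sum>j\<in>{k..<n}. if \<beta> j then 2 ^ j else 0)"
  unfolding bin_value_def by (simp add: sum.atLeastLessThan_concat)

lemma sum_power2_atLeastLessThan: "k \<le> n \<Longrightarrow> (\<Sum>j\<in>{k..<n}. (2::nat) ^ j) + 2 ^ k = 2 ^ n"
proof (induction n)
  case (Suc n)
  then show ?case by (cases "k = Suc n") simp_all
qed simp

lemma partial_bin_value_bound:
  "k \<le> n \<Longrightarrow> (\<Sum>j\<in>{k..<n}. if \<beta> j then (2::nat) ^ j else 0) + 2 ^ k \<le> 2 ^ n"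
proof -
  assume "k \<le> n"
  have "(\<Sum>j\<in>{k..<n}. if \<beta> j then (2::nat) ^ j else 0) \<le> (\<Sum>j\<in>{k..<n}. 2 ^ j)"
    by (rule sum_mono) simp
  then show ?thesis using sum_power2_atLeastLessThan[OF \<open>k \<le> n\<close>] by simp
qed

lemma bin_value_Suc: "bin_value (Suc n) \<beta> = bin_value n \<beta> + (if \<beta> n then 2 ^ n else 0)"
  unfolding bin_value_def by simp

lemma bin_value_cong: "(\<And>j. j < n \<Longrightarrow> \<beta> j = \<gamma> j) \<Longrightarrow> bin_value n \<beta> = bin_value n \<gamma>"
  unfolding bin_value_def by (rule sum.cong) auto

lemma bin_value_diff_cong:
  assumes "m \<le> k" "\<And>j. m \<le> j \<Longrightarrow> \<beta> j = \<gamma> j"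
  shows "int (bin_value k \<beta>) - int (bin_value m \<beta>) = int (bin_value k \<gamma>) - int (bin_value m \<gamma>)"
  using bin_value_split[OF assms(1), of \<beta>] bin_value_split[OF assms(1), of \<gamma>]
    sum.cong[OF refl, of "{m..<k}" "\<lambda>j. if \<beta> j then (2::nat) ^ j else 0" "\<lambda>j. if \<gamma> j then 2 ^ j else 0"]
    assms(2) by simp

lemma bin_value_all_True: "(\<And>j. j < n \<Longrightarrow> \<beta> j) \<Longrightarrow> bin_value n \<beta> + 1 = 2 ^ n"
  using sum_power2_atLeastLessThan[of 0 n] unfolding bin_value_def by simp

lemma bin_value_all_False: "(\<And>j. j < n \<Longrightarrow> \<not> \<beta> j) \<Longrightarrow> bin_value n \<beta> = 0"
  unfolding bin_value_def by (intro sum.neutral) auto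

lemma bin_value_ge_power: "\<beta> i \<Longrightarrow> i < n \<Longrightarrow> 2 ^ i \<le> bin_value n \<beta>"
  unfolding bin_value_def
  using member_le_sum[of i "{0..<n}" "\<lambda>j. if \<beta> j then (2::nat) ^ j else 0"] by simp

lemma bin_value_add_compl: "bin_value n \<beta> + bin_value n (\<lambda>j. \<not> \<beta> j) + 1 = 2 ^ n"
proof -
  have "bin_value n \<beta> + bin_value n (\<lambda>j. \<not> \<beta> j) = (\<Sum>j\<in>{0..<n}. (2::nat) ^ j)"
    unfolding bin_value_def sum.distrib[symmetric] by (rule sum.cong) auto
  then show ?thesis using sum_power2_atLeastLessThan[of 0 n] by simp
qed

lemma bin_value_add_power_less: "\<not> \<beta> i \<Longrightarrow> i < n \<Longrightarrow> bin_value n \<beta> + 2 ^ i < 2 ^ n"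
  using bin_value_ge_power[of "\<lambda>j. \<not> \<beta> j" i n] bin_value_add_compl[of n \<beta>] by simp

lemma measurable_bin_value:
  assumes "\<And>j. (\<lambda>x. f x j) \<in> M \<rightarrow>\<^sub>M count_space UNIV"
  shows "(\<lambda>x. bin_value n (f x)) \<in> M \<rightarrow>\<^sub>M count_space UNIV"
proof -
  have "(\<lambda>x. (\<lambda>q. bin_value n (\<lambda>j. q ! j)) (map (\<lambda>j. f x j) [0..<n])) \<in> M \<rightarrow>\<^sub>M count_space UNIV"
    by (rule measurable_count_space_compose[OF measurable_count_space_map[OF assms]])
  moreover have "bin_value n (\<lambda>j. map (f x) [0..<n] ! j) = bin_value n (f x)" for x
    by (rule bin_value_cong) simp
  ultimately show ?thesis by simp
qed

definition nonconstant_tails :: "(nat \<Rightarrow> bool) \<Rightarrow> bool" where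
  "nonconstant_tails \<alpha> \<longleftrightarrow> (\<forall>n. (\<exists>i\<ge>n. \<alpha> i) \<and> (\<exists>i\<ge>n. \<not> \<alpha> i))"

lemma odometer_eq:
  assumes "\<not> \<alpha> n" and "\<And>j. j < n \<Longrightarrow> \<alpha> j"
  shows "odometer \<alpha> = (\<lambda>i. if i < n then False else if i = n then True else \<alpha> i)"
proof -
  have "(LEAST i. \<not> \<alpha> i) = n"
    using assms by (intro Least_equality) (auto simp: not_less[symmetric])
  then show ?thesis using assms(1) unfolding odometer_def by auto
qed

lemma bin_value_Suc_first_zero:
  "\<not> \<alpha> n \<Longrightarrow> (\<And>j. j < n \<Longrightarrow> \<alpha> j) \<Longrightarrow> bin_value (Suc n) \<alpha> + 1 = 2 ^ n"
  using bin_value_all_True[of n \<alpha>] by (simp add: bin_value_Suc)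

lemma bin_value_odometer:
  assumes "\<not> \<alpha> n" and "\<And>j. j < n \<Longrightarrow> \<alpha> j"
  shows "k \<le> n \<Longrightarrow> bin_value k (odometer \<alpha>) = 0"
    and "n < k \<Longrightarrow> bin_value k (odometer \<alpha>) = bin_value k \<alpha> + 1"
proof -
  note od = odometer_eq[of \<alpha> n, OF assms]
  show low: "bin_value k (odometer \<alpha>) = 0" if "k \<le> n" for k
    using that by (intro bin_value_all_False) (simp add: od)
  assume "n < k"
  have "int (bin_value k \<alpha>) - int (bin_value (Suc n) \<alpha>) =
      int (bin_value k (odometer \<alpha>)) - int (bin_value (Suc n) (odometer \<alpha>))"
    using \<open>n < k\<close> by (intro bin_value_diff_cong) (auto simp: od)
  moreover have "bin_value (Suc n) (odometer \<alpha>) = 2 ^ n"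
    using low[of n] by (simp add: bin_value_Suc od)
  ultimately show "bin_value k (odometer \<alpha>) = bin_value k \<alpha> + 1"
    using bin_value_Suc_first_zero[of \<alpha> n, OF assms] by linarith
qed

lemma nonconstant_tails_odometer:
  assumes "nonconstant_tails \<alpha>"
  shows "nonconstant_tails (odometer \<alpha>)"
proof -
  obtain n where "\<And>i. n < i \<Longrightarrow> odometer \<alpha> i = \<alpha> i"
  proof (cases "\<exists>n. \<not> \<alpha> n")
    case True
    then show ?thesis
      using that[of "LEAST n. \<not> \<alpha> n"] unfolding odometer_def by (simp add: Let_def)
  qed (use that[of 0] odometer_def in auto)
  moreover have "(\<exists>i\<ge>max m (Suc n). \<alpha> i) \<and> (\<exists>i\<ge>max m (Suc n). \<not> \<alpha> i)" for m
    using assms unfolding nonconstant_tails_def by blast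
  ultimately show ?thesis
    unfolding nonconstant_tails_def by (metis Suc_le_eq max.bounded_iff)
qed

lemma nonconstant_tails_window:
  assumes "nonconstant_tails \<alpha>"
  shows "\<exists>n. 0 \<le> k + int (bin_value n \<alpha>) \<and> k + int (bin_value n \<alpha>) < 2 ^ n"
proof -
  obtain i1 where i1: "nat (- k) \<le> i1" "\<alpha> i1" using assms unfolding nonconstant_tails_def by blast
  obtain i2 where i2: "nat k \<le> i2" "\<not> \<alpha> i2" using assms unfolding nonconstant_tails_def by blast
  define n where "n = Suc (max i1 i2)"
  have "2 ^ i1 \<le> bin_value n \<alpha>" using bin_value_ge_power[of \<alpha> i1 n, OF i1(2)] n_def by simp
  moreover have "bin_value n \<alpha> + 2 ^ i2 < 2 ^ n" using bin_value_add_power_less[of \<alpha> i2 n, OF i2(2)] n_def by simp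
  moreover have "i1 < 2 ^ i1" "i2 < 2 ^ i2" by (simp_all add: less_exp)
  ultimately have "i1 < bin_value n \<alpha>" "bin_value n \<alpha> + i2 < 2 ^ n" by linarith+
  then have "int i1 < int (bin_value n \<alpha>)" "int (bin_value n \<alpha> + i2) < int (2 ^ n)"
    by (simp_all only: of_nat_less_iff)
  moreover have "- k \<le> int i1" "k \<le> int i2" using i1(1) i2(1) by linarith+
  ultimately show ?thesis by (intro exI[of _ n]) simp
qed

section \<open>The Bernoulli measure on 0-1 sequences\<close>

abbreviation coin :: "bool measure" where
  "coin \<equiv> measure_pmf (bernoulli_pmf (1/2))"

lemma space_bernoulli_seq [simp]: "space bernoulli_seq = UNIV"
  unfolding bernoulli_seq_def by (simp add: space_PiM)

lemma prob_space_bernoulli_seq: "prob_space bernoulli_seq"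
  unfolding bernoulli_seq_def by (rule prob_space_PiM) (simp add: prob_space_measure_pmf)

lemma product_prob_space_coin: "product_prob_space (\<lambda>_::nat. coin)"
proof -
  interpret prob_space coin by (rule prob_space_measure_pmf)
  show ?thesis ..
qed

lemma measurable_coordinate_bernoulli_seq [measurable]:
  "(\<lambda>\<alpha>. \<alpha> i) \<in> bernoulli_seq \<rightarrow>\<^sub>M count_space UNIV"
proof -
  have "(\<lambda>\<alpha>. \<alpha> i) \<in> bernoulli_seq \<rightarrow>\<^sub>M coin"
    unfolding bernoulli_seq_def by (rule measurable_component_singleton) simp
  then show ?thesis by (simp cong: measurable_cong_sets)
qed

lemma measurable_bernoulli_seqI:
  assumes "\<And>i. (\<lambda>x. f x i) \<in> M \<rightarrow>\<^sub>M count_space UNIV"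
  shows "f \<in> M \<rightarrow>\<^sub>M bernoulli_seq"
  unfolding bernoulli_seq_def
proof (rule measurable_PiM_single')
  show "(\<lambda>x. f x i) \<in> M \<rightarrow>\<^sub>M coin" for i
    using assms[of i] by (simp cong: measurable_cong_sets)
qed (simp add: space_PiM)

lemma emeasure_bernoulli_seq_fixed_coordinates:
  assumes "finite I"
  shows "emeasure bernoulli_seq {\<alpha>. \<forall>i\<in>I. \<alpha> i = c i} = ennreal ((1/2) ^ card I)"
proof -
  interpret product_prob_space "\<lambda>_::nat. coin" UNIV by (rule product_prob_space_coin)
  have "emeasure (Pi\<^sub>M UNIV (\<lambda>_. coin)) {\<alpha> \<in> space (Pi\<^sub>M UNIV (\<lambda>_. coin)). \<forall>i\<in>I. \<alpha> i \<in> {c i}}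
      = (\<Prod>i\<in>I. emeasure coin {c i})"
    using assms by (intro emeasure_PiM_Collect) auto
  also have "\<dots> = (\<Prod>i\<in>I. ennreal (1/2))"
    by (simp add: emeasure_pmf_single)
  also have "\<dots> = ennreal (\<Prod>i\<in>I. 1/2)"
    by (rule prod_ennreal) simp
  also have "\<dots> = ennreal ((1/2) ^ card I)"
    by simp
  finally show ?thesis
    unfolding bernoulli_seq_def by (simp add: space_PiM)
qed

definition prefix_cyl :: "bool list \<Rightarrow> (nat \<Rightarrow> bool) set" where
  "prefix_cyl c = {\<alpha>. map \<alpha> [0..<length c] = c}"

lemma mem_prefix_cyl_iff: "\<alpha> \<in> prefix_cyl c \<longleftrightarrow> (\<forall>i<length c. \<alpha> i = c ! i)"
  unfolding prefix_cyl_def list_eq_iff_nth_eq by simp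

lemma emeasure_prefix_cyl: "emeasure bernoulli_seq (prefix_cyl c) = ennreal ((1/2) ^ length c)"
proof -
  have "prefix_cyl c = {\<alpha>. \<forall>i\<in>{..<length c}. \<alpha> i = c ! i}"
    by (auto simp: mem_prefix_cyl_iff)
  then show ?thesis using emeasure_bernoulli_seq_fixed_coordinates[of "{..<length c}" "nth c"] by simp
qed

lemma prefix_cyl_in_sets [measurable]: "prefix_cyl c \<in> sets bernoulli_seq"
proof -
  have "prefix_cyl c = (\<lambda>\<alpha>. map (\<lambda>i. \<alpha> i) [0..<length c]) -` {c} \<inter> space bernoulli_seq"
    by (auto simp: prefix_cyl_def)
  also have "\<dots> \<in> sets bernoulli_seq"
    by (rule measurable_sets[OF measurable_count_space_map]) simp_all
  finally show ?thesis .
qed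

lemma prefix_cyl_disjoint: "length q = length q' \<Longrightarrow> q \<noteq> q' \<Longrightarrow> prefix_cyl q \<inter> prefix_cyl q' = {}"
  unfolding prefix_cyl_def by auto

lemma UN_prefix_cyl: "(\<Union>q\<in>{q. length q = n}. prefix_cyl q) = UNIV"
  by (auto intro!: UN_I[of "map _ [0..<n]"] simp: prefix_cyl_def)

lemma finite_lists_of_length: "finite {c :: bool list. length c = n}"
  using finite_lists_length_eq[of "UNIV :: bool set" n] by simp

lemma prefix_cyl_Int:
  "length c \<le> length d \<Longrightarrow> prefix_cyl c \<inter> prefix_cyl d = (if take (length c) d = c then prefix_cyl d else {})"
  by (auto simp: mem_prefix_cyl_iff list_eq_iff_nth_eq)

definition long_cyls :: "nat \<Rightarrow> (nat \<Rightarrow> bool) set set" where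
  "long_cyls n = {prefix_cyl c | c. n \<le> length c} \<union> {{}}"

lemma Int_stable_long_cyls: "Int_stable (long_cyls n)"
proof (rule Int_stableI)
  fix a b assume "a \<in> long_cyls n" "b \<in> long_cyls n"
  then consider "a = {} \<or> b = {}"
    | c d where "a = prefix_cyl c" "n \<le> length c" "b = prefix_cyl d" "n \<le> length d"
    unfolding long_cyls_def by blast
  then show "a \<inter> b \<in> long_cyls n"
  proof cases
    case 2
    then show ?thesis
      using prefix_cyl_Int[of c d] prefix_cyl_Int[of d c]
      by (cases "length c \<le> length d") (auto simp: long_cyls_def Int_commute)
  qed (auto simp: long_cyls_def)
qed

lemma sets_bernoulli_seq_long_cyls: "sets bernoulli_seq = sigma_sets UNIV (long_cyls n)"
proof (rule antisym)
  interpret sigma_algebra UNIV "sigma_sets UNIV (long_cyls n)"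
    by (rule sigma_algebra_sigma_sets) simp
  have "{f. f i \<in> A} \<in> sigma_sets UNIV (long_cyls n)" for i and A :: "bool set"
  proof -
    let ?C = "{c. length c = max n (Suc i) \<and> c ! i \<in> A}"
    have "finite ?C" by (rule finite_subset[OF _ finite_lists_of_length]) auto
    moreover have "prefix_cyl c \<in> sigma_sets UNIV (long_cyls n)" if "c \<in> ?C" for c
      using that by (auto simp: long_cyls_def intro!: sigma_sets.Basic)
    ultimately have "(\<Union>c\<in>?C. prefix_cyl c) \<in> sigma_sets UNIV (long_cyls n)"
      by (intro finite_UN) auto
    moreover have "(\<Union>c\<in>?C. prefix_cyl c) = {f. f i \<in> A}"
      by (auto intro!: UN_I[of "map _ [0..<max n (Suc i)]"] simp: mem_prefix_cyl_iff nth_map_upt)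
    ultimately show ?thesis by simp
  qed
  then show "sets bernoulli_seq \<subseteq> sigma_sets UNIV (long_cyls n)"
    unfolding bernoulli_seq_def sets_PiM_single by (auto intro!: sigma_sets_mono)
  have "long_cyls n \<subseteq> sets bernoulli_seq" unfolding long_cyls_def by auto
  from sets.sigma_sets_subset[OF this] show "sigma_sets UNIV (long_cyls n) \<subseteq> sets bernoulli_seq"
    by simp
qed

lemma mem_prefix_cyl_split:
  assumes "n \<le> length c"
  shows "\<alpha> \<in> prefix_cyl c \<longleftrightarrow>
    map \<alpha> [0..<n] = take n c \<and> (\<forall>i. n \<le> i \<and> i < length c \<longrightarrow> \<alpha> i = c ! i)"
  using assms unfolding mem_prefix_cyl_iff list_eq_iff_nth_eq
  by (auto simp: not_le[symmetric])

lemma transpose_eq_iff_involution: "Transposition.transpose a b q = t \<longleftrightarrow> q = Transposition.transpose a b t"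
  by (metis transpose_involutory)

lemma length_transpose:
  "length a = n \<Longrightarrow> length b = n \<Longrightarrow> length q = n \<Longrightarrow> length (Transposition.transpose a b q) = n"
  unfolding Transposition.transpose_def by simp

definition swap_prefix :: "nat \<Rightarrow> bool list \<Rightarrow> bool list \<Rightarrow> (nat \<Rightarrow> bool) \<Rightarrow> nat \<Rightarrow> bool" where
  "swap_prefix n a b \<alpha> = (\<lambda>i. if i < n then Transposition.transpose a b (map \<alpha> [0..<n]) ! i else \<alpha> i)"

lemma map_swap_prefix:
  "length a = n \<Longrightarrow> length b = n \<Longrightarrow> map (swap_prefix n a b \<alpha>) [0..<n] = Transposition.transpose a b (map \<alpha> [0..<n])"
  unfolding swap_prefix_def using length_transpose[of a n b "map \<alpha> [0..<n]"]
  by (simp add: list_eq_iff_nth_eq)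

lemma swap_prefix_ge: "n \<le> i \<Longrightarrow> swap_prefix n a b \<alpha> i = \<alpha> i"
  unfolding swap_prefix_def by simp

lemma swap_prefix_cong:
  assumes "\<And>i. i < n \<Longrightarrow> \<alpha> i = \<beta> i" and "i < n"
  shows "swap_prefix n a b \<alpha> i = swap_prefix n a b \<beta> i"
proof -
  have "map \<alpha> [0..<n] = map \<beta> [0..<n]" using assms(1) by simp
  then show ?thesis unfolding swap_prefix_def using assms(2) by (simp only: if_True)
qed

lemma vimage_swap_prefix_prefix_cyl:
  assumes a: "length a = n" and b: "length b = n" and c: "n \<le> length c"
  shows "swap_prefix n a b -` prefix_cyl c = prefix_cyl (Transposition.transpose a b (take n c) @ drop n c)"
    (is "_ = prefix_cyl ?c")
proof -
  have len: "length (Transposition.transpose a b (take n c)) = n" using length_transpose[OF a b] c by simp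
  then have "length ?c = length c" "take n ?c = Transposition.transpose a b (take n c)"
    "\<And>i. n \<le> i \<Longrightarrow> ?c ! i = c ! i"
    using c by (simp_all add: nth_append)
  then show ?thesis
    using mem_prefix_cyl_split[OF c] mem_prefix_cyl_split[of n ?c] c
    by (auto simp: map_swap_prefix[OF a b] swap_prefix_ge transpose_eq_iff_involution)
qed

lemma measurable_swap_prefix: "swap_prefix n a b \<in> bernoulli_seq \<rightarrow>\<^sub>M bernoulli_seq"
proof (rule measurable_bernoulli_seqI)
  fix i
  have "(\<lambda>\<alpha>. (map (\<lambda>i. \<alpha> i) [0..<n], \<alpha> i)) \<in> bernoulli_seq \<rightarrow>\<^sub>M count_space UNIV"
    by (intro measurable_count_space_Pair measurable_count_space_map) simp_all
  from measurable_count_space_compose[OF this,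
      of "\<lambda>(q, v). if i < n then Transposition.transpose a b q ! i else v"]
  show "(\<lambda>\<alpha>. swap_prefix n a b \<alpha> i) \<in> bernoulli_seq \<rightarrow>\<^sub>M count_space UNIV"
    unfolding swap_prefix_def by simp
qed

lemma distr_swap_prefix:
  assumes a: "length a = n" and b: "length b = n"
  shows "distr bernoulli_seq bernoulli_seq (swap_prefix n a b) = bernoulli_seq"
proof (rule measure_eqI_generator_eq_countable[OF Int_stable_long_cyls[of n],
      where A="prefix_cyl ` {c. length c = n}" and \<Omega>=UNIV])
  show "sets (distr bernoulli_seq bernoulli_seq (swap_prefix n a b)) = sigma_sets UNIV (long_cyls n)"
    "sets bernoulli_seq = sigma_sets UNIV (long_cyls n)"
    using sets_bernoulli_seq_long_cyls by simp_all
next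
  fix X assume "X \<in> long_cyls n"
  then consider "X = {}" | c where "X = prefix_cyl c" "n \<le> length c" unfolding long_cyls_def by blast
  then show "emeasure (distr bernoulli_seq bernoulli_seq (swap_prefix n a b)) X = emeasure bernoulli_seq X"
  proof cases
    case 2
    then show ?thesis
      using length_transpose[OF a b, of "take n c"]
      by (simp add: emeasure_distr measurable_swap_prefix vimage_swap_prefix_prefix_cyl[OF a b]
          emeasure_prefix_cyl)
  qed simp
next
  show "prefix_cyl ` {c. length c = n} \<subseteq> long_cyls n" by (auto simp: long_cyls_def)
  show "\<Union> (prefix_cyl ` {c. length c = n}) = UNIV" by (rule UN_prefix_cyl)
  show "countable (prefix_cyl ` {c. length c = n})"
    using finite_lists_of_length by (intro countable_image countable_finite)
  interpret prob_space "distr bernoulli_seq bernoulli_seq (swap_prefix n a b)"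
    by (rule prob_space.prob_space_distr[OF prob_space_bernoulli_seq measurable_swap_prefix])
  show "emeasure (distr bernoulli_seq bernoulli_seq (swap_prefix n a b)) X \<noteq> \<infinity>" for X
    by simp
qed (simp add: long_cyls_def)

lemma emeasure_constant_tail: "emeasure bernoulli_seq {\<alpha>. \<forall>i\<ge>n. \<alpha> i = v} = 0"
proof -
  have "emeasure bernoulli_seq {\<alpha>. \<forall>i\<ge>n. \<alpha> i = v} \<le> ennreal ((1/2) ^ k)" for k
  proof -
    have "{\<alpha>. \<forall>i\<ge>n. \<alpha> i = v} \<subseteq> {\<alpha>. \<forall>i\<in>{n..<n+k}. \<alpha> i = v}" by auto
    moreover have "{\<alpha> \<in> space bernoulli_seq. \<forall>i\<in>{n..<n+k}. \<alpha> i = v} \<in> sets bernoulli_seq"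
      by measurable
    ultimately show ?thesis
      using emeasure_mono emeasure_bernoulli_seq_fixed_coordinates[of "{n..<n+k}" "\<lambda>_. v"] by fastforce
  qed
  moreover have "(\<lambda>k. ennreal ((1/2) ^ k)) \<longlonglongrightarrow> ennreal 0"
    by (intro tendsto_ennrealI LIMSEQ_power_zero) simp
  ultimately have "emeasure bernoulli_seq {\<alpha>. \<forall>i\<ge>n. \<alpha> i = v} \<le> ennreal 0"
    using LIMSEQ_le_const by blast
  then show ?thesis by simp
qed

lemma AE_nonconstant_tails: "AE \<alpha> in bernoulli_seq. nonconstant_tails \<alpha>"
proof -
  have "AE \<alpha> in bernoulli_seq. \<not> (\<forall>i\<ge>n. \<alpha> i = v)" for n v
  proof (rule AE_I[OF _ emeasure_constant_tail])
    have "{\<alpha> \<in> space bernoulli_seq. \<forall>i. n \<le> i \<longrightarrow> \<alpha> i = v} \<in> sets bernoulli_seq"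
      by measurable
    then show "{\<alpha>. \<forall>i\<ge>n. \<alpha> i = v} \<in> sets bernoulli_seq" by simp
  qed auto
  then have "AE \<alpha> in bernoulli_seq. \<forall>n v. \<not> (\<forall>i\<ge>n. \<alpha> i = v)"
    by (simp add: AE_all_countable)
  then show ?thesis
    by eventually_elim (auto simp: nonconstant_tails_def)
qed

lemma nonconstant_tails_in_sets [measurable]:
  "{\<alpha> \<in> space bernoulli_seq. nonconstant_tails \<alpha>} \<in> sets bernoulli_seq"
  unfolding nonconstant_tails_def by measurable

definition swap_shift :: "nat \<Rightarrow> bool list \<Rightarrow> bool list \<Rightarrow> (nat \<Rightarrow> bool) \<Rightarrow> int" where
  "swap_shift n a b \<alpha> = int (bin_value n (swap_prefix n a b \<alpha>)) - int (bin_value n \<alpha>)"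

lemma swap_shift_cong: "(\<And>i. i < n \<Longrightarrow> \<alpha> i = \<beta> i) \<Longrightarrow> swap_shift n a b \<alpha> = swap_shift n a b \<beta>"
  unfolding swap_shift_def using swap_prefix_cong[of n \<alpha> \<beta>] bin_value_cong[of n]
  by (metis (no_types, lifting))

lemma measurable_swap_shift: "swap_shift n a b \<in> bernoulli_seq \<rightarrow>\<^sub>M count_space UNIV"
proof -
  have "(\<lambda>\<alpha>. (bin_value n (swap_prefix n a b \<alpha>), bin_value n \<alpha>)) \<in> bernoulli_seq \<rightarrow>\<^sub>M count_space UNIV"
    using measurable_swap_prefix[unfolded measurable_def]
    by (intro measurable_count_space_Pair measurable_bin_value)
      (simp_all add: measurable_comp[OF measurable_swap_prefix measurable_coordinate_bernoulli_seq,
          unfolded comp_def])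
  from measurable_count_space_compose[OF this, of "\<lambda>(u, v). int u - int v"]
  show ?thesis unfolding swap_shift_def[abs_def] by simp
qed

lemma OP_offset_bound: "k \<le> n \<Longrightarrow> OP_offset c k n + 2 ^ k \<le> 2 ^ n"
  unfolding OP_offset_def using partial_bin_value_bound[of k n "\<lambda>j. c ! j"] by simp

lemma OP_offset_Suc:
  "k < n \<Longrightarrow> OP_offset c k n = (if c ! k then 2 ^ k else 0) + OP_offset c (Suc k) n"
  unfolding OP_offset_def by (simp add: sum.atLeast_Suc_lessThan)

lemma OP_component_window:
  "OP_component b k (take (2 * 2 ^ k) (drop d w)) = take (2 ^ k) (drop ((if b then 2 ^ k else 0) + d) w)"
  unfolding OP_component_def by (simp add: drop_take add.commute min_def)

lemma OP_replace_in_OP_paths: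
  assumes y: "y \<in> OP_paths" and c: "length c = n"
  shows "OP_replace n c y \<in> OP_paths"
proof -
  let ?v = "fst y n" and ?y' = "OP_replace n c y"
  have lv: "length ?v = 2 ^ n" using OP_pathsD(1)[OF y] .
  have below: "fst ?y' k = take (2 ^ k) (drop (OP_offset c k n) ?v)" if "k \<le> n" for k
  proof (cases "k = n")
    case True
    then show ?thesis using lv by (simp add: OP_replace_def OP_offset_def)
  qed (use that in \<open>simp add: OP_replace_def\<close>)
  have "OP_vertex k (fst ?y' k) \<and> fst ?y' k = OP_component (snd ?y' k) k (fst ?y' (Suc k))" for k
  proof (cases "k < n")
    case True
    have "fst ?y' k = OP_component (c ! k) k (fst ?y' (Suc k))"
      using True by (simp add: below OP_component_window OP_offset_Suc)
    moreover have "length (fst ?y' k) = 2 ^ k"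
      using True lv OP_offset_bound[of k n c] by (simp add: below)
    ultimately show ?thesis using True by (simp add: OP_vertex_def OP_replace_def)
  next
    case False
    then show ?thesis using OP_pathsD[OF y, of k] by (simp add: OP_vertex_def OP_replace_def)
  qed
  then show ?thesis unfolding OP_paths_def by blast
qed

lemma OP_swap_in_OP_paths:
  "y \<in> OP_paths \<Longrightarrow> length a = n \<Longrightarrow> length b = n \<Longrightarrow> OP_swap n a b y \<in> OP_paths"
  unfolding OP_swap_def using OP_replace_in_OP_paths by simp

lemma measurable_OP_swap:
  assumes a: "length a = n" and b: "length b = n"
  shows "OP_swap n a b \<in> TOP \<rightarrow>\<^sub>M TOP"
proof (rule measurable_TOPI)
  show "OP_swap n a b y \<in> OP_paths" if "y \<in> space TOP" for y
    using that OP_swap_in_OP_paths[OF _ a b] by simp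
  fix k
  let ?prefix = "\<lambda>y. map (\<lambda>j. snd y j) [0..<n]"
  define F where "F = (\<lambda>(q, v, w).
      if q = a \<and> k < n then take (2 ^ k) (drop (OP_offset b k n) v)
      else if q = b \<and> k < n then take (2 ^ k) (drop (OP_offset a k n) v) else w :: bool list)"
  have "(\<lambda>y. F (?prefix y, fst y n, fst y k)) \<in> TOP \<rightarrow>\<^sub>M count_space UNIV"
    by (rule measurable_count_space_compose, intro measurable_count_space_Pair measurable_count_space_map
        measurable_vertex_TOP measurable_edge_TOP)
  moreover have "(\<lambda>y. F (?prefix y, fst y n, fst y k)) = (\<lambda>y. fst (OP_swap n a b y) k)"
    by (auto simp: F_def OP_swap_def OP_replace_def)
  ultimately show "(\<lambda>y. fst (OP_swap n a b y) k) \<in> TOP \<rightarrow>\<^sub>M count_space UNIV"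
    by (simp only:)
  define E where "E = (\<lambda>(q, w).
      if q = a \<and> k < n then b ! k else if q = b \<and> k < n then a ! k else w :: bool)"
  have "(\<lambda>y. E (?prefix y, snd y k)) \<in> TOP \<rightarrow>\<^sub>M count_space UNIV"
    by (rule measurable_count_space_compose, intro measurable_count_space_Pair measurable_count_space_map
        measurable_edge_TOP)
  moreover have "(\<lambda>y. E (?prefix y, snd y k)) = (\<lambda>y. snd (OP_swap n a b y) k)"
    by (auto simp: E_def OP_swap_def OP_replace_def)
  ultimately show "(\<lambda>y. snd (OP_swap n a b y) k) \<in> TOP \<rightarrow>\<^sub>M count_space UNIV"
    by (simp only:)
qed

abbreviation itineraries :: "(int \<Rightarrow> bool) measure" where
  "itineraries \<equiv> PiM UNIV (\<lambda>_. count_space UNIV)"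

lemma coordinate_in_sets_itineraries: "{s. s i} \<in> sets itineraries"
proof -
  have "(\<lambda>s. s i) \<in> itineraries \<rightarrow>\<^sub>M count_space UNIV"
    by (rule measurable_component_singleton) simp
  from measurable_sets[OF this, of "{True}"] show ?thesis by (simp add: space_PiM vimage_def)
qed

text \<open>Left inverse of the encoding path_of below, on sequences with nonconstant tails.\<close>
definition reading_floor :: "op_path \<Rightarrow> int \<Rightarrow> nat" where
  "reading_floor y k = (LEAST n. 0 \<le> k + int (bin_value n (snd y)) \<and> k + int (bin_value n (snd y)) < 2 ^ n)"

definition path_itinerary :: "op_path \<Rightarrow> int \<Rightarrow> bool" where
  "path_itinerary y k = fst y (reading_floor y k) ! nat (k + int (bin_value (reading_floor y k) (snd y)))"

lemma measurable_bin_value_TOP: "(\<lambda>y. bin_value n (snd y)) \<in> TOP \<rightarrow>\<^sub>M count_space UNIV"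
  by (rule measurable_bin_value) (rule measurable_edge_TOP)

lemma measurable_path_itinerary: "path_itinerary \<in> TOP \<rightarrow>\<^sub>M itineraries"
proof (rule measurable_PiM_single')
  fix k
  have "(\<lambda>y. reading_floor y k) \<in> TOP \<rightarrow>\<^sub>M count_space UNIV"
    unfolding reading_floor_def
    by (intro measurable_Least measurable_count_space_compose[OF measurable_bin_value_TOP])
  moreover have "(\<lambda>y. fst y n ! nat (k + int (bin_value n (snd y)))) \<in> TOP \<rightarrow>\<^sub>M count_space UNIV" for n
    using measurable_count_space_compose[OF measurable_count_space_Pair[OF
          measurable_vertex_TOP measurable_bin_value_TOP], of "\<lambda>(w, r). w ! nat (k + int r)"]
    by simp
  ultimately show "(\<lambda>y. path_itinerary y k) \<in> TOP \<rightarrow>\<^sub>M count_space UNIV"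
    unfolding path_itinerary_def
    by (rule measurable_compose_countable[where f="\<lambda>n y. fst y n ! nat (k + int (bin_value n (snd y)))",
          rotated])
qed (simp add: space_PiM)

lemma measurable_snd_TOP: "snd \<in> TOP \<rightarrow>\<^sub>M bernoulli_seq"
  by (rule measurable_bernoulli_seqI) (rule measurable_edge_TOP)

lemma measure_preserving_map_comp:
  "measure_preserving_map N K f \<Longrightarrow> measure_preserving_map M N g \<Longrightarrow>
    measure_preserving_map M K (\<lambda>x. f (g x))"
  unfolding measure_preserving_map_def
  using distr_distr[of f N K g M] measurable_comp[of g M N f K] by (simp add: comp_def)

lemma measure_preserving_map_funpow:
  "measure_preserving_map M M f \<Longrightarrow> measure_preserving_map M M (f ^^ n)"
proof (induction n)
  case 0
  then show ?case by (simp add: measure_preserving_map_def id_def)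
next
  case (Suc n)
  then show ?case using measure_preserving_map_comp[of M M f M "f ^^ n"] by (simp add: comp_def)
qed

lemma AE_measure_preserving_map:
  assumes f: "measure_preserving_map M N f" and Q: "Measurable.pred N Q" and "AE y in N. Q y"
  shows "AE x in M. Q (f x)"
proof -
  have "distr M N f = N" using f by (simp add: measure_preserving_map_def)
  then have "AE y in distr M N f. Q y" using assms(3) by (simp only:)
  then show ?thesis using AE_distr_iff[of f M N Q] f Q by (simp add: measure_preserving_map_def)
qed

lemma emeasure_vimage_measure_preserving_map:
  "measure_preserving_map M N f \<Longrightarrow> A \<in> sets N \<Longrightarrow> emeasure M (f -` A \<inter> space M) = emeasure N A"
  unfolding measure_preserving_map_def by (metis emeasure_distr)

section \<open>Recovering a point of a Polish space from a generating map\<close>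

lemma dense_sequence_exists:
  "\<exists>d :: nat \<Rightarrow> 'a::{metric_space, second_countable_topology}. \<forall>x e. 0 < e \<longrightarrow> (\<exists>i. dist (d i) x < e)"
proof -
  have "\<exists>E::'a set. countable E \<and> (\<forall>X. open X \<longrightarrow> X \<noteq> {} \<longrightarrow> (\<exists>d\<in>E. d \<in> X))"
    by (rule countable_dense_exists)
  then obtain E :: "'a set" where "countable E" and E: "\<And>X. open X \<Longrightarrow> X \<noteq> {} \<Longrightarrow> \<exists>d\<in>E. d \<in> X"
    by blast
  moreover have "E \<noteq> {}" using E[of UNIV] by auto
  ultimately have range: "range (from_nat_into E) = E" by simp
  have "\<exists>i. dist (from_nat_into E i) x < e" if e: "0 < e" for x e
  proof -
    obtain y where "y \<in> E" "dist x y < e" using E[of "ball x e"] e by auto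
    moreover from \<open>y \<in> E\<close> obtain i where "y = from_nat_into E i" using range by auto
    ultimately show ?thesis by (auto simp: dist_commute)
  qed
  then show ?thesis by blast
qed

lemma LIMSEQ_dist_less_inverse_Suc:
  fixes X :: "nat \<Rightarrow> 'a::metric_space"
  assumes close: "\<And>m. dist (X m) x < 1 / Suc m"
  shows "X \<longlonglongrightarrow> x"
proof (rule metric_LIMSEQ_I)
  fix r :: real assume "r > 0"
  then obtain M :: nat where M: "1 / Suc M < r"
    using reals_Archimedean by (auto simp: inverse_eq_divide)
  have "dist (X m) x < r" if "M \<le> m" for m
  proof -
    have "1 / real (Suc m) \<le> 1 / Suc M" using that by (simp add: frac_le)
    then show ?thesis using close[of m] M by linarith
  qed
  then show "\<exists>M. \<forall>m\<ge>M. dist (X m) x < r" by blast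
qed

text \<open>A point is the limit of the centres of the shrinking balls of a countable
  dense family that contain it, so it is a measurable function of the set of
  those balls.\<close>
lemma point_from_balls:
  fixes d :: "nat \<Rightarrow> 'a::polish_space" and D :: "nat \<Rightarrow> nat \<Rightarrow> 'b set"
  assumes dense: "\<And>x e. 0 < e \<Longrightarrow> \<exists>i. dist (d i) x < e"
    and D: "\<And>i m. D i m \<in> sets N"
  shows "\<exists>g\<in>borel_measurable N. \<forall>s x.
    (\<forall>i m. x \<in> ball (d i) (1 / Suc m) \<longleftrightarrow> s \<in> D i m) \<longrightarrow> g s = x"
proof -
  define J where "J s m = (LEAST i. s \<in> D i m)" for s m
  define h where "h m s = (if Cauchy (\<lambda>m. d (J s m)) then d (J s m) else d 0)" for m s
  have conv: "(\<lambda>m. h m s) \<longlonglongrightarrow> lim (\<lambda>m. h m s)" for s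
    unfolding h_def by (cases "Cauchy (\<lambda>m. d (J s m))") (auto simp: Cauchy_convergent_iff convergent_LIMSEQ_iff)
  have "(\<lambda>s. J s m) \<in> N \<rightarrow>\<^sub>M count_space UNIV" for m
    unfolding J_def using D by (intro measurable_Least) (simp add: pred_def)
  then have [measurable]: "(\<lambda>s. d (J s m)) \<in> borel_measurable N" for m
    using measurable_compose_countable[where f="\<lambda>i s. d i", OF measurable_const] by simp
  have h_measurable: "h m \<in> borel_measurable N" for m
    unfolding h_def[abs_def] by measurable
  show ?thesis
  proof (intro bexI allI impI)
    show "(\<lambda>s. lim (\<lambda>m. h m s)) \<in> borel_measurable N"
      by (rule borel_measurable_LIMSEQ_metric[OF h_measurable conv])
    fix s x assume balls: "\<forall>i m. x \<in> ball (d i) (1 / Suc m) \<longleftrightarrow> s \<in> D i m"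
    have "dist (d (J s m)) x < 1 / Suc m" for m
    proof -
      obtain i where "dist (d i) x < 1 / Suc m" using dense[of "1 / Suc m" x] by auto
      then have "s \<in> D i m" using balls by (simp add: dist_commute)
      then have "s \<in> D (J s m) m" unfolding J_def by (rule LeastI)
      then show ?thesis using balls by (simp add: dist_commute)
    qed
    then have lim: "(\<lambda>m. d (J s m)) \<longlonglongrightarrow> x" by (rule LIMSEQ_dist_less_inverse_Suc)
    then have "Cauchy (\<lambda>m. d (J s m))" by (rule LIMSEQ_imp_Cauchy)
    then have "(\<lambda>m. h m s) = (\<lambda>m. d (J s m))" unfolding h_def by simp
    then show "lim (\<lambda>m. h m s) = x" using lim by (simp add: limI)
  qed
qed

lemma AE_mem_iff_vimage:
  assumes f: "f \<in> M \<rightarrow>\<^sub>M N" and B: "B \<in> sets M" and C: "C \<in> sets (vimage_algebra (space M) f N)"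
    and null: "emeasure M ((B - C) \<union> (C - B)) = 0"
  shows "\<exists>D\<in>sets N. AE x in M. x \<in> B \<longleftrightarrow> f x \<in> D"
proof -
  have "f \<in> space M \<rightarrow> space N" using measurable_space[OF f] by blast
  from C[unfolded sets_vimage_algebra2[OF this]] obtain D where D: "D \<in> sets N" "C = f -` D \<inter> space M"
    by blast
  then have "C \<in> sets M" using measurable_sets[OF f D(1)] by simp
  then have "(B - C) \<union> (C - B) \<in> sets M" using B by blast
  moreover have "{x \<in> space M. \<not> (x \<in> B \<longleftrightarrow> f x \<in> D)} \<subseteq> (B - C) \<union> (C - B)"
    using D(2) sets.sets_into_space[OF B] by blast
  ultimately have "AE x in M. x \<in> B \<longleftrightarrow> f x \<in> D"
    using null by (intro AE_I)
  with D(1) show ?thesis by blast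
qed

lemma AE_left_inverse_of_generating_map:
  fixes p :: "'a::polish_space measure"
  assumes sets_p: "sets p = sets borel" and f: "f \<in> p \<rightarrow>\<^sub>M N"
    and gen: "\<And>B. B \<in> sets p \<Longrightarrow> \<exists>C\<in>sets (vimage_algebra (space p) f N).
        emeasure p ((B - C) \<union> (C - B)) = 0"
  obtains g where "g \<in> N \<rightarrow>\<^sub>M borel" and "AE x in p. g (f x) = x"
proof -
  obtain d :: "nat \<Rightarrow> 'a" where dense: "\<And>x e. 0 < e \<Longrightarrow> \<exists>i. dist (d i) x < e"
    using dense_sequence_exists by blast
  have "\<exists>D\<in>sets N. AE x in p. x \<in> ball (d i) (1 / Suc m) \<longleftrightarrow> f x \<in> D" for i m
  proof -
    have B: "ball (d i) (1 / Suc m) \<in> sets p" by (simp add: sets_p)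
    from gen[OF B] obtain C where "C \<in> sets (vimage_algebra (space p) f N)"
      and "emeasure p ((ball (d i) (1 / Suc m) - C) \<union> (C - ball (d i) (1 / Suc m))) = 0"
      by blast
    then show ?thesis by (rule AE_mem_iff_vimage[OF f B])
  qed
  then obtain D where D: "\<And>i m. D i m \<in> sets N"
    and AE_D: "\<And>i m. AE x in p. x \<in> ball (d i) (1 / Suc m) \<longleftrightarrow> f x \<in> D i m"
    by metis
  obtain g where g: "g \<in> borel_measurable N"
    and recover: "\<And>s x. \<forall>i m. x \<in> ball (d i) (1 / Suc m) \<longleftrightarrow> s \<in> D i m \<Longrightarrow> g s = x"
    using point_from_balls[of d D N, OF dense D] by blast
  have "AE x in p. \<forall>i m. x \<in> ball (d i) (1 / Suc m) \<longleftrightarrow> f x \<in> D i m"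
    using AE_D by (simp add: AE_all_countable)
  then have "AE x in p. g (f x) = x" by eventually_elim (rule recover)
  with g show ?thesis by (rule that)
qed

section \<open>An automorphism with a binomial generator\<close>

locale binomial_generated =
  fixes p :: "'a::polish_space measure" and T T' :: "'a \<Rightarrow> 'a" and P :: "'a set"
  assumes prob_space_p: "prob_space p" and sets_p: "sets p = sets borel"
    and T_preserving: "measure_preserving_map p p T"
    and T'_preserving: "measure_preserving_map p p T'"
    and AE_T'_T: "AE x in p. T' (T x) = x" and AE_T_T': "AE x in p. T (T' x) = x"
    and P_in_sets: "P \<in> sets p"
    and generates: "\<forall>B\<in>sets p. \<exists>C\<in>sigma_sets (space p)
        ((\<Union>j. {{x\<in>space p. (T ^^ j) x \<in> P}}) \<union> (\<Union>j. {{x\<in>space p. (T' ^^ j) x \<in> P}})).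
      emeasure p ((B - C) \<union> (C - B)) = 0"
begin

lemma space_p [simp]: "space p = UNIV"
  using sets_eq_imp_space_eq[OF sets_p] by simp

lemma measurable_p_iff: "measurable M p = measurable M borel" "measurable p N = measurable borel N"
  by (simp_all add: sets_p cong: measurable_cong_sets)

definition Tpow :: "int \<Rightarrow> 'a \<Rightarrow> 'a" where
  "Tpow k = (if 0 \<le> k then T ^^ nat k else T' ^^ nat (- k))"

lemma Tpow_of_nat: "Tpow (int n) x = (T ^^ n) x"
  unfolding Tpow_def by simp

lemma Tpow_uminus_of_nat: "Tpow (- int n) x = (T' ^^ n) x"
  unfolding Tpow_def by (cases "n = 0") simp_all

lemma Tpow_preserving: "measure_preserving_map p p (Tpow k)"
  unfolding Tpow_def
  using measure_preserving_map_funpow[OF T_preserving] measure_preserving_map_funpow[OF T'_preserving]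
  by simp

lemma measurable_Tpow: "Tpow k \<in> p \<rightarrow>\<^sub>M p"
  using Tpow_preserving unfolding measure_preserving_map_def by simp

definition invertible_points :: "'a set" where
  "invertible_points = {x. T' (T x) = x \<and> T (T' x) = x}"

lemma invertible_points_in_sets: "invertible_points \<in> sets p"
proof -
  have [measurable]: "T \<in> borel_measurable borel" "T' \<in> borel_measurable borel"
    using T_preserving T'_preserving unfolding measure_preserving_map_def measurable_p_iff by auto
  have "{x \<in> space borel. T' (T x) = x \<and> T (T' x) = x} \<in> sets borel" by measurable
  then show ?thesis unfolding invertible_points_def sets_p by simp
qed

lemma Tpow_T:
  assumes "x \<in> invertible_points"
  shows "Tpow k (T x) = Tpow (k + 1) x"
proof (cases "0 \<le> k")
  case True
  then have "k = int (nat k)" "k + 1 = int (Suc (nat k))" by simp_all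
  then show ?thesis using Tpow_of_nat[of "nat k"] Tpow_of_nat[of "Suc (nat k)"]
    by (metis funpow_Suc_right o_apply)
next
  case False
  define m where "m = nat (- k - 1)"
  then have "k = - int (Suc m)" "k + 1 = - int m" using False by simp_all
  moreover have "(T' ^^ Suc m) (T x) = (T' ^^ m) x"
    using assms by (simp add: invertible_points_def funpow_Suc_right del: funpow.simps)
  ultimately show ?thesis by (metis Tpow_uminus_of_nat)
qed

lemma Tpow_T':
  assumes "x \<in> invertible_points"
  shows "Tpow k (T' x) = Tpow (k - 1) x"
proof (cases "0 < k")
  case True
  define m where "m = nat (k - 1)"
  then have "k = int (Suc m)" "k - 1 = int m" using True by simp_all
  moreover have "(T ^^ Suc m) (T' x) = (T ^^ m) x"
    using assms by (simp add: invertible_points_def funpow_Suc_right del: funpow.simps)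
  ultimately show ?thesis by (metis Tpow_of_nat)
next
  case False
  define m where "m = nat (- k)"
  then have "k = - int m" "k - 1 = - int (Suc m)" using False by simp_all
  then show ?thesis using Tpow_uminus_of_nat[of m] Tpow_uminus_of_nat[of "Suc m"]
    by (metis funpow_Suc_right o_apply)
qed

definition stable_points :: "'a set" where
  "stable_points = {x. \<forall>k. Tpow k x \<in> invertible_points}"

lemma stable_points_in_sets: "stable_points \<in> sets p"
proof -
  have "stable_points = (\<Inter>k. Tpow k -` invertible_points \<inter> space p)"
    unfolding stable_points_def by auto
  also have "\<dots> \<in> sets p"
    using measurable_sets[OF measurable_Tpow invertible_points_in_sets] by (intro sets.countable_INT) auto
  finally show ?thesis .
qed

lemma AE_stable_points: "AE x in p. x \<in> stable_points"
proof -
  have "AE x in p. x \<in> invertible_points"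
    using AE_T'_T AE_T_T' by eventually_elim (simp add: invertible_points_def)
  then have "AE x in p. Tpow k x \<in> invertible_points" for k
    using invertible_points_in_sets
    by (intro AE_measure_preserving_map[OF Tpow_preserving]) (simp_all add: pred_def)
  then show ?thesis unfolding stable_points_def by (simp add: AE_all_countable)
qed

lemma Tpow_stable_point_invertible: "x \<in> stable_points \<Longrightarrow> Tpow k x \<in> invertible_points"
  unfolding stable_points_def by blast

lemma stable_point_invertible: "x \<in> stable_points \<Longrightarrow> x \<in> invertible_points"
  using Tpow_stable_point_invertible[of x 0] Tpow_of_nat[of 0 x] by simp

lemma Tpow_funpow_T:
  "x \<in> stable_points \<Longrightarrow> Tpow a ((T ^^ n) x) = Tpow (a + int n) x"
proof (induction n arbitrary: a)
  case (Suc n)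
  have "(T ^^ n) x \<in> invertible_points"
    using Tpow_stable_point_invertible[OF Suc.prems, of "int n"] by (simp add: Tpow_of_nat)
  then show ?case using Suc by (simp add: Tpow_T algebra_simps)
qed simp

lemma Tpow_funpow_T':
  "x \<in> stable_points \<Longrightarrow> Tpow a ((T' ^^ n) x) = Tpow (a - int n) x"
proof (induction n arbitrary: a)
  case (Suc n)
  have "(T' ^^ n) x \<in> invertible_points"
    using Tpow_stable_point_invertible[OF Suc.prems, of "- int n"] by (simp add: Tpow_uminus_of_nat)
  then show ?case using Suc by (simp add: Tpow_T' algebra_simps)
qed simp

lemma Tpow_Tpow:
  assumes "x \<in> stable_points"
  shows "Tpow a (Tpow b x) = Tpow (a + b) x"
proof (cases "0 \<le> b")
  case True
  then have "Tpow b x = (T ^^ nat b) x" "int (nat b) = b" using Tpow_of_nat[of "nat b"] by simp_all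
  then show ?thesis using Tpow_funpow_T[OF assms, of a "nat b"] by simp
next
  case False
  then have "Tpow b x = (T' ^^ nat (- b)) x" "int (nat (- b)) = - b"
    using Tpow_uminus_of_nat[of "nat (- b)"] by simp_all
  then show ?thesis using Tpow_funpow_T'[OF assms, of a "nat (- b)"] by simp
qed

lemma stable_points_T:
  assumes "x \<in> stable_points"
  shows "T x \<in> stable_points"
  unfolding stable_points_def
  using Tpow_T[OF stable_point_invertible[OF assms]] Tpow_stable_point_invertible[OF assms] by simp

definition itinerary :: "'a \<Rightarrow> int \<Rightarrow> bool" where
  "itinerary x k \<longleftrightarrow> Tpow k x \<in> P"

lemma itinerary_T: "x \<in> invertible_points \<Longrightarrow> itinerary (T x) k = itinerary x (k + 1)"
  unfolding itinerary_def by (simp add: Tpow_T)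

lemma itinerary_Tpow: "x \<in> stable_points \<Longrightarrow> itinerary (Tpow d x) k = itinerary x (k + d)"
  unfolding itinerary_def by (simp add: Tpow_Tpow)

lemma measurable_itinerary_coordinate: "(\<lambda>x. itinerary x k) \<in> p \<rightarrow>\<^sub>M count_space UNIV"
proof -
  have "{x \<in> space p. itinerary x k} = Tpow k -` P \<inter> space p" unfolding itinerary_def by auto
  then show ?thesis using measurable_sets[OF measurable_Tpow P_in_sets] by (simp add: pred_def)
qed

lemma measurable_itinerary: "itinerary \<in> p \<rightarrow>\<^sub>M itineraries"
  by (rule measurable_PiM_single') (simp_all add: measurable_itinerary_coordinate space_PiM)

lemma itinerary_generates:
  assumes "B \<in> sets p"
  shows "\<exists>C\<in>sets (vimage_algebra (space p) itinerary itineraries). emeasure p ((B - C) \<union> (C - B)) = 0"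
proof -
  let ?V = "vimage_algebra (space p) itinerary itineraries"
  have "{x \<in> space p. (T ^^ j) x \<in> P} = itinerary -` {s. s (int j)} \<inter> space p"
    "{x \<in> space p. (T' ^^ j) x \<in> P} = itinerary -` {s. s (- int j)} \<inter> space p" for j
    by (auto simp: itinerary_def Tpow_of_nat Tpow_uminus_of_nat)
  then have "{x \<in> space p. (T ^^ j) x \<in> P} \<in> sets ?V" "{x \<in> space p. (T' ^^ j) x \<in> P} \<in> sets ?V" for j
    by (simp_all only:) (rule in_vimage_algebra[OF coordinate_in_sets_itineraries])+
  then have "(\<Union>j. {{x\<in>space p. (T ^^ j) x \<in> P}}) \<union> (\<Union>j. {{x\<in>space p. (T' ^^ j) x \<in> P}})
      \<subseteq> sets ?V"
    by blast
  from sets.sigma_sets_subset[OF this] have "sigma_sets (space p)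
      ((\<Union>j. {{x\<in>space p. (T ^^ j) x \<in> P}}) \<union> (\<Union>j. {{x\<in>space p. (T' ^^ j) x \<in> P}})) \<subseteq> sets ?V"
    by simp
  then show ?thesis using generates assms by blast
qed

definition decode :: "(int \<Rightarrow> bool) \<Rightarrow> 'a" where
  "decode = (SOME g. g \<in> itineraries \<rightarrow>\<^sub>M borel \<and> (AE x in p. g (itinerary x) = x))"

lemma decode: "decode \<in> itineraries \<rightarrow>\<^sub>M borel" "AE x in p. decode (itinerary x) = x"
proof -
  obtain g where "g \<in> itineraries \<rightarrow>\<^sub>M borel" "AE x in p. g (itinerary x) = x"
    using AE_left_inverse_of_generating_map[OF sets_p measurable_itinerary itinerary_generates] .
  then have "\<exists>g. g \<in> itineraries \<rightarrow>\<^sub>M borel \<and> (AE x in p. g (itinerary x) = x)" by blast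
  from someI_ex[OF this] show "decode \<in> itineraries \<rightarrow>\<^sub>M borel" "AE x in p. decode (itinerary x) = x"
    unfolding decode_def by blast+
qed

definition good_points :: "'a set" where
  "good_points = {x \<in> stable_points. \<forall>k. decode (itinerary (Tpow k x)) = Tpow k x}"

lemma decoded_points_in_sets: "{x. decode (itinerary x) = x} \<in> sets p"
proof -
  have "(\<lambda>x. decode (itinerary x)) \<in> borel_measurable p"
    using measurable_comp[OF measurable_itinerary decode(1)] by (simp add: comp_def)
  moreover have "(\<lambda>x. x) \<in> borel_measurable p" by (simp add: measurable_p_iff)
  ultimately show ?thesis using measurable_equality_set[of "\<lambda>x. decode (itinerary x)" p "\<lambda>x. x"]
    by simp
qed

lemma good_points_in_sets: "good_points \<in> sets p"
proof -
  have "good_points = stable_points \<inter> (\<Inter>k. Tpow k -` {x. decode (itinerary x) = x} \<inter> space p)"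
    unfolding good_points_def by auto
  also have "\<dots> \<in> sets p"
    using stable_points_in_sets measurable_sets[OF measurable_Tpow decoded_points_in_sets]
    by (intro sets.Int sets.countable_INT) auto
  finally show ?thesis .
qed

lemma AE_good_points: "AE x in p. x \<in> good_points"
proof -
  have "AE x in p. decode (itinerary (Tpow k x)) = Tpow k x" for k
    using decode(2) decoded_points_in_sets
    by (intro AE_measure_preserving_map[OF Tpow_preserving]) (simp_all add: pred_def)
  then have "AE x in p. \<forall>k. decode (itinerary (Tpow k x)) = Tpow k x" by (simp add: AE_all_countable)
  with AE_stable_points show ?thesis unfolding good_points_def by eventually_elim simp
qed

lemma good_points_T:
  assumes "x \<in> good_points"
  shows "T x \<in> good_points"
proof -
  have x: "x \<in> stable_points" using assms unfolding good_points_def by blast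
  have shift: "Tpow k (T x) = Tpow (k + 1) x" for k using Tpow_T[OF stable_point_invertible[OF x]] .
  have "decode (itinerary (Tpow (k + 1) x)) = Tpow (k + 1) x" for k
    using assms unfolding good_points_def by blast
  then show ?thesis using stable_points_T[OF x] unfolding good_points_def by (simp add: shift)
qed

lemma decode_itinerary:
  assumes "x \<in> good_points"
  shows "decode (itinerary x) = x"
proof -
  have "Tpow 0 x = x" using Tpow_of_nat[of 0 x] by simp
  with assms show ?thesis unfolding good_points_def by (metis (mono_tags, lifting) mem_Collect_eq)
qed

section \<open>Encoding points and 0-1 sequences as paths\<close>

definition path_of :: "'a \<times> (nat \<Rightarrow> bool) \<Rightarrow> op_path" where
  "path_of z = (\<lambda>n. map (\<lambda>j. itinerary (fst z) (int j - int (bin_value n (snd z)))) [0..<2 ^ n], snd z)"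

lemma length_vertex_path_of [simp]: "length (fst (path_of z) n) = 2 ^ n"
  unfolding path_of_def by simp

lemma nth_vertex_path_of:
  "j < 2 ^ n \<Longrightarrow> fst (path_of (x, \<alpha>)) n ! j = itinerary x (int j - int (bin_value n \<alpha>))"
  unfolding path_of_def by simp

lemma snd_path_of [simp]: "snd (path_of z) = snd z"
  unfolding path_of_def by simp

lemma path_of_in_OP_paths: "path_of (x, \<alpha>) \<in> OP_paths"
proof -
  let ?v = "\<lambda>n. fst (path_of (x, \<alpha>)) n"
  have "?v n = OP_component (\<alpha> n) n (?v (Suc n))" for n
  proof (rule nth_equalityI)
    show "length (?v n) = length (OP_component (\<alpha> n) n (?v (Suc n)))"
      by (simp add: OP_component_def)
    fix j assume "j < length (?v n)"
    then have j: "j < 2 ^ n" by simp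
    show "?v n ! j = OP_component (\<alpha> n) n (?v (Suc n)) ! j"
    proof (cases "\<alpha> n")
      case True
      have "OP_component (\<alpha> n) n (?v (Suc n)) ! j = ?v (Suc n) ! (2 ^ n + j)"
        using True by (simp add: OP_component_def nth_drop)
      also have "\<dots> = itinerary x (int j - int (bin_value n \<alpha>))"
        using True j by (simp add: nth_vertex_path_of bin_value_Suc)
      finally show ?thesis using j by (simp add: nth_vertex_path_of)
    next
      case False
      have "OP_component (\<alpha> n) n (?v (Suc n)) ! j = ?v (Suc n) ! j"
        using False j by (simp add: OP_component_def)
      also have "\<dots> = itinerary x (int j - int (bin_value n \<alpha>))"
        using False j by (simp add: nth_vertex_path_of bin_value_Suc)
      finally show ?thesis using j by (simp add: nth_vertex_path_of)
    qed
  qed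
  with length_vertex_path_of show ?thesis
    unfolding OP_paths_def OP_vertex_def mem_Collect_eq snd_path_of snd_conv by blast
qed

lemma measurable_path_of: "path_of \<in> (p \<Otimes>\<^sub>M bernoulli_seq) \<rightarrow>\<^sub>M TOP"
proof (rule measurable_TOPI)
  show "path_of z \<in> OP_paths" for z
    using path_of_in_OP_paths[of "fst z" "snd z"] by (simp only: prod.collapse)
  fix n
  have itinerary_coordinate:
    "(\<lambda>z. itinerary (fst z) i) \<in> (p \<Otimes>\<^sub>M bernoulli_seq) \<rightarrow>\<^sub>M count_space UNIV" for i
    using measurable_comp[OF measurable_fst measurable_itinerary_coordinate] by (simp add: comp_def)
  have "(\<lambda>z. bin_value n (snd z)) \<in> (p \<Otimes>\<^sub>M bernoulli_seq) \<rightarrow>\<^sub>M count_space UNIV"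
    by (rule measurable_bin_value) (simp add: measurable_comp[OF measurable_snd
          measurable_coordinate_bernoulli_seq, unfolded comp_def])
  from measurable_compose_countable[where f="\<lambda>r z. map (\<lambda>j. itinerary (fst z) (int j - int r)) [0..<2 ^ n]",
      OF measurable_count_space_map[OF itinerary_coordinate] this]
  show "(\<lambda>z. fst (path_of z) n) \<in> (p \<Otimes>\<^sub>M bernoulli_seq) \<rightarrow>\<^sub>M count_space UNIV"
    unfolding path_of_def by simp
  show "(\<lambda>z. snd (path_of z) n) \<in> (p \<Otimes>\<^sub>M bernoulli_seq) \<rightarrow>\<^sub>M count_space UNIV"
    using measurable_comp[OF measurable_snd measurable_coordinate_bernoulli_seq] by (simp add: comp_def)
qed

lemma adic_path_of:
  assumes x: "x \<in> invertible_points" and zero: "\<not> \<alpha> n" and ones: "\<And>j. j < n \<Longrightarrow> \<alpha> j"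
  shows "adic (path_of (x, \<alpha>)) = path_of (T x, odometer \<alpha>)"
proof -
  let ?y = "path_of (x, \<alpha>)"
  have "(LEAST i. \<not> \<alpha> i) = n"
    using zero ones by (intro Least_equality) (auto simp: not_less[symmetric])
  then have adic: "adic ?y =
      (\<lambda>k. if k \<le> n then take (2 ^ k) (drop (2 ^ n) (fst ?y (Suc n))) else fst ?y k, odometer \<alpha>)"
    unfolding adic_def using zero by (auto simp: Let_def odometer_eq[of \<alpha> n, OF zero ones])
  have "fst (adic ?y) k = fst (path_of (T x, odometer \<alpha>)) k" for k
  proof (cases "k \<le> n")
    case True
    then have le: "(2::nat) ^ k \<le> 2 ^ n" by simp
    show ?thesis
    proof (rule nth_equalityI)
      show "length (fst (adic ?y) k) = length (fst (path_of (T x, odometer \<alpha>)) k)"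
        using True le by (simp add: adic)
      fix j assume "j < length (fst (adic ?y) k)"
      then have j: "j < 2 ^ k" using True le by (simp add: adic)
      then have "j < 2 ^ n" using le by linarith
      then have pos: "2 ^ n + j < 2 ^ Suc n" by simp
      have "fst (adic ?y) k ! j = itinerary x (int (2 ^ n + j) - int (bin_value (Suc n) \<alpha>))"
        using True j le nth_vertex_path_of[OF pos, of x \<alpha>] by (simp add: adic)
      also have "int (2 ^ n + j) - int (bin_value (Suc n) \<alpha>) = int j + 1"
        using bin_value_Suc_first_zero[of \<alpha> n, OF zero ones]
        by (simp add: of_nat_add[symmetric] del: of_nat_add)
      also have "itinerary x (int j + 1) = itinerary (T x) (int j)"
        using itinerary_T[OF x] by simp
      also have "\<dots> = fst (path_of (T x, odometer \<alpha>)) k ! j"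
        using j bin_value_odometer(1)[of \<alpha> n, OF zero ones True] by (simp add: nth_vertex_path_of)
      finally show "fst (adic ?y) k ! j = fst (path_of (T x, odometer \<alpha>)) k ! j" .
    qed
  next
    case False
    then have "fst (adic ?y) k = fst ?y k" by (simp add: adic)
    also have "\<dots> = fst (path_of (T x, odometer \<alpha>)) k"
      using False bin_value_odometer(2)[of \<alpha> n k, OF zero ones] itinerary_T[OF x]
      by (simp add: path_of_def algebra_simps)
    finally show ?thesis .
  qed
  then show ?thesis by (simp add: prod_eq_iff fun_eq_iff adic)
qed

lemma OP_replace_path_of:
  fixes \<alpha> :: "nat \<Rightarrow> bool"
  assumes x: "x \<in> stable_points" and c: "length c = n"
  defines "\<alpha>' \<equiv> (\<lambda>i. if i < n then c ! i else \<alpha> i)"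
  shows "OP_replace n c (path_of (x, \<alpha>)) = path_of (Tpow (int (bin_value n \<alpha>') - int (bin_value n \<alpha>)) x, \<alpha>')"
    (is "_ = path_of (Tpow ?d x, \<alpha>')")
proof -
  let ?y = "path_of (x, \<alpha>)"
  have "fst (OP_replace n c ?y) k = fst (path_of (Tpow ?d x, \<alpha>')) k" for k
  proof (cases "k < n")
    case True
    then have kn: "k \<le> n" by simp
    have offset: "OP_offset c k n = (\<Sum>j\<in>{k..<n}. if \<alpha>' j then 2 ^ j else 0)"
      unfolding OP_offset_def \<alpha>'_def by (rule sum.cong) auto
    then have offset_int: "int (OP_offset c k n) = int (bin_value n \<alpha>') - int (bin_value k \<alpha>')"
      using bin_value_split[OF kn, of \<alpha>'] by simp
    have bound: "OP_offset c k n + 2 ^ k \<le> 2 ^ n" using OP_offset_bound[OF kn] .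
    show ?thesis
    proof (rule nth_equalityI)
      show "length (fst (OP_replace n c ?y) k) = length (fst (path_of (Tpow ?d x, \<alpha>')) k)"
        using True bound by (simp add: OP_replace_def)
      fix j assume "j < length (fst (OP_replace n c ?y) k)"
      then have j: "j < 2 ^ k" using True bound by (simp add: OP_replace_def)
      then have "OP_offset c k n + j < 2 ^ n" using bound by linarith
      then have "fst (OP_replace n c ?y) k ! j = itinerary x (int (OP_offset c k n + j) - int (bin_value n \<alpha>))"
        using True j bound by (simp add: OP_replace_def nth_vertex_path_of)
      also have "int (OP_offset c k n + j) - int (bin_value n \<alpha>) = int j - int (bin_value k \<alpha>') + ?d"
        using offset_int by simp
      also have "itinerary x (int j - int (bin_value k \<alpha>') + ?d) = fst (path_of (Tpow ?d x, \<alpha>')) k ! j"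
        using j itinerary_Tpow[OF x] by (simp add: nth_vertex_path_of)
      finally show "fst (OP_replace n c ?y) k ! j = fst (path_of (Tpow ?d x, \<alpha>')) k ! j" .
    qed
  next
    case False
    have "int (bin_value k \<alpha>') - int (bin_value n \<alpha>') = int (bin_value k \<alpha>) - int (bin_value n \<alpha>)"
      using False by (intro bin_value_diff_cong) (auto simp: \<alpha>'_def)
    then show ?thesis using False itinerary_Tpow[OF x]
      by (simp add: OP_replace_def path_of_def algebra_simps)
  qed
  moreover have "snd (OP_replace n c ?y) = \<alpha>'"
    unfolding OP_replace_def \<alpha>'_def by auto
  ultimately show ?thesis by (simp add: prod_eq_iff fun_eq_iff)
qed

definition swap_lift :: "nat \<Rightarrow> bool list \<Rightarrow> bool list \<Rightarrow> 'a \<times> (nat \<Rightarrow> bool) \<Rightarrow> 'a \<times> (nat \<Rightarrow> bool)" where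
  "swap_lift n a b z = (Tpow (swap_shift n a b (snd z)) (fst z), swap_prefix n a b (snd z))"

lemma OP_swap_path_of:
  assumes x: "x \<in> stable_points" and a: "length a = n" and b: "length b = n"
  shows "OP_swap n a b (path_of (x, \<alpha>)) = path_of (swap_lift n a b (x, \<alpha>))"
proof -
  let ?q = "map \<alpha> [0..<n]" and ?y = "path_of (x, \<alpha>)"
  have len: "length (Transposition.transpose a b ?q) = n" by (rule length_transpose[OF a b]) simp
  have "OP_replace n (Transposition.transpose a b ?q) ?y = path_of (swap_lift n a b (x, \<alpha>))"
    using OP_replace_path_of[OF x len, of \<alpha>]
    unfolding swap_lift_def swap_shift_def swap_prefix_def by simp
  moreover have "OP_replace n ?q ?y = ?y"
    using OP_replace_path_of[OF x, of ?q n \<alpha>] Tpow_of_nat[of 0 x] by (simp cong: if_cong)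
  ultimately show ?thesis
    unfolding OP_swap_def by (auto simp: Transposition.transpose_def)
qed

lemma prob_space_product: "prob_space (p \<Otimes>\<^sub>M bernoulli_seq)"
proof -
  interpret p: prob_space p by (rule prob_space_p)
  interpret m: prob_space bernoulli_seq by (rule prob_space_bernoulli_seq)
  interpret pair_prob_space p bernoulli_seq ..
  show ?thesis by unfold_locales
qed

lemma measurable_swap_lift: "swap_lift n a b \<in> (p \<Otimes>\<^sub>M bernoulli_seq) \<rightarrow>\<^sub>M (p \<Otimes>\<^sub>M bernoulli_seq)"
  unfolding swap_lift_def[abs_def]
proof (rule measurable_Pair)
  have "(\<lambda>z. Tpow d (fst z)) \<in> (p \<Otimes>\<^sub>M bernoulli_seq) \<rightarrow>\<^sub>M p" for d
    using measurable_comp[OF measurable_fst measurable_Tpow] by (simp add: comp_def)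
  moreover have "(\<lambda>z. swap_shift n a b (snd z)) \<in> (p \<Otimes>\<^sub>M bernoulli_seq) \<rightarrow>\<^sub>M count_space UNIV"
    using measurable_comp[OF measurable_snd measurable_swap_shift] by (simp add: comp_def)
  ultimately show "(\<lambda>z. Tpow (swap_shift n a b (snd z)) (fst z)) \<in> (p \<Otimes>\<^sub>M bernoulli_seq) \<rightarrow>\<^sub>M p"
    by (rule measurable_compose_countable[where f="\<lambda>d z. Tpow d (fst z)"])
  show "(\<lambda>z. swap_prefix n a b (snd z)) \<in> (p \<Otimes>\<^sub>M bernoulli_seq) \<rightarrow>\<^sub>M bernoulli_seq"
    using measurable_comp[OF measurable_snd measurable_swap_prefix] by (simp add: comp_def)
qed

text \<open>On the cylinder of a fixed prefix q the shift of the lifted swap is constant.\<close>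
lemma vimage_swap_lift_Times:
  "swap_lift n a b -` (A \<times> B) = (\<Union>q\<in>{q. length q = n}.
     Tpow (swap_shift n a b (nth q)) -` A \<times> (prefix_cyl q \<inter> swap_prefix n a b -` B))"
proof (intro set_eqI iffI)
  fix z assume "z \<in> swap_lift n a b -` (A \<times> B)"
  moreover obtain x \<alpha> where z: "z = (x, \<alpha>)" by (cases z)
  moreover have "swap_shift n a b \<alpha> = swap_shift n a b (nth (map \<alpha> [0..<n]))"
    by (rule swap_shift_cong) simp
  ultimately show "z \<in> (\<Union>q\<in>{q. length q = n}.
      Tpow (swap_shift n a b (nth q)) -` A \<times> (prefix_cyl q \<inter> swap_prefix n a b -` B))"
    by (intro UN_I[of "map \<alpha> [0..<n]"]) (auto simp: swap_lift_def prefix_cyl_def)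
next
  fix z assume "z \<in> (\<Union>q\<in>{q. length q = n}.
      Tpow (swap_shift n a b (nth q)) -` A \<times> (prefix_cyl q \<inter> swap_prefix n a b -` B))"
  then obtain q x \<alpha> where "length q = n" "z = (x, \<alpha>)" "\<alpha> \<in> prefix_cyl q"
    "Tpow (swap_shift n a b (nth q)) x \<in> A" "swap_prefix n a b \<alpha> \<in> B"
    by auto
  moreover from this have "swap_shift n a b \<alpha> = swap_shift n a b (nth q)"
    by (intro swap_shift_cong) (simp add: mem_prefix_cyl_iff)
  ultimately show "z \<in> swap_lift n a b -` (A \<times> B)" by (simp add: swap_lift_def)
qed

lemma emeasure_Tpow_vimage: "A \<in> sets p \<Longrightarrow> emeasure p (Tpow k -` A) = emeasure p A"
  using emeasure_vimage_measure_preserving_map[OF Tpow_preserving] by simp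

lemma distr_swap_lift:
  assumes a: "length a = n" and b: "length b = n"
  shows "distr (p \<Otimes>\<^sub>M bernoulli_seq) (p \<Otimes>\<^sub>M bernoulli_seq) (swap_lift n a b) = p \<Otimes>\<^sub>M bernoulli_seq"
proof -
  interpret p: prob_space p by (rule prob_space_p)
  interpret m: prob_space bernoulli_seq by (rule prob_space_bernoulli_seq)
  let ?Q = "{q :: bool list. length q = n}" and ?S = "swap_prefix n a b"
  have "p \<Otimes>\<^sub>M bernoulli_seq = distr (p \<Otimes>\<^sub>M bernoulli_seq) (p \<Otimes>\<^sub>M bernoulli_seq) (swap_lift n a b)"
  proof (rule pair_measure_eqI)
    fix A B assume A: "A \<in> sets p" and B: "B \<in> sets bernoulli_seq"
    let ?R = "\<lambda>q. Tpow (swap_shift n a b (nth q)) -` A \<times> (prefix_cyl q \<inter> ?S -` B)"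
    have SB: "?S -` B \<in> sets bernoulli_seq"
      using measurable_sets[OF measurable_swap_prefix B] by simp
    have TA: "Tpow d -` A \<in> sets p" for d using measurable_sets[OF measurable_Tpow A] by simp
    have disj: "disjoint_family_on ?R ?Q" "disjoint_family_on (\<lambda>q. prefix_cyl q \<inter> ?S -` B) ?Q"
      using prefix_cyl_disjoint unfolding disjoint_family_on_def by blast+
    have "emeasure (distr (p \<Otimes>\<^sub>M bernoulli_seq) (p \<Otimes>\<^sub>M bernoulli_seq) (swap_lift n a b)) (A \<times> B)
        = emeasure (p \<Otimes>\<^sub>M bernoulli_seq) (\<Union>q\<in>?Q. ?R q)"
      using A B by (simp add: emeasure_distr measurable_swap_lift space_pair_measure vimage_swap_lift_Times)
    also have "\<dots> = (\<Sum>q\<in>?Q. emeasure (p \<Otimes>\<^sub>M bernoulli_seq) (?R q))"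
      using TA SB disj(1) finite_lists_of_length by (intro sum_emeasure[symmetric]) auto
    also have "\<dots> = (\<Sum>q\<in>?Q. emeasure p A * emeasure bernoulli_seq (prefix_cyl q \<inter> ?S -` B))"
      using TA SB A by (intro sum.cong refl) (simp add: m.emeasure_pair_measure_Times emeasure_Tpow_vimage)
    also have "\<dots> = emeasure p A * (\<Sum>q\<in>?Q. emeasure bernoulli_seq (prefix_cyl q \<inter> ?S -` B))"
      by (simp add: sum_distrib_left)
    also have "(\<Sum>q\<in>?Q. emeasure bernoulli_seq (prefix_cyl q \<inter> ?S -` B)) =
        emeasure bernoulli_seq (\<Union>q\<in>?Q. prefix_cyl q \<inter> ?S -` B)"
      using SB disj(2) finite_lists_of_length by (intro sum_emeasure) auto
    also have "(\<Union>q\<in>?Q. prefix_cyl q \<inter> ?S -` B) = ?S -` B"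
      using UN_prefix_cyl[of n] by blast
    also have "emeasure bernoulli_seq (?S -` B) = emeasure bernoulli_seq B"
      using emeasure_vimage_measure_preserving_map[of bernoulli_seq bernoulli_seq ?S B] B
        measurable_swap_prefix distr_swap_prefix[OF a b] by (simp add: measure_preserving_map_def)
    finally show "emeasure p A * emeasure bernoulli_seq B =
        emeasure (distr (p \<Otimes>\<^sub>M bernoulli_seq) (p \<Otimes>\<^sub>M bernoulli_seq) (swap_lift n a b)) (A \<times> B)"
      by simp
  qed (unfold_locales, simp)
  then show ?thesis by simp
qed

section \<open>The central measure and the isomorphism\<close>

lemma path_itinerary_path_of:
  assumes "nonconstant_tails \<alpha>"
  shows "path_itinerary (path_of (x, \<alpha>)) = itinerary x"
proof
  fix k
  define n where "n = reading_floor (path_of (x, \<alpha>)) k"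
  have "0 \<le> k + int (bin_value n \<alpha>) \<and> k + int (bin_value n \<alpha>) < 2 ^ n"
    unfolding n_def reading_floor_def snd_path_of snd_conv
    using nonconstant_tails_window[OF assms, of k] by (rule LeastI_ex)
  then have window: "0 \<le> k + int (bin_value n \<alpha>)" "nat (k + int (bin_value n \<alpha>)) < 2 ^ n"
    by (auto simp: nat_less_iff)
  have "path_itinerary (path_of (x, \<alpha>)) k = fst (path_of (x, \<alpha>)) n ! nat (k + int (bin_value n \<alpha>))"
    unfolding path_itinerary_def n_def[symmetric] by simp
  also have "\<dots> = itinerary x k" using window by (simp add: nth_vertex_path_of)
  finally show "path_itinerary (path_of (x, \<alpha>)) k = itinerary x k" .
qed

definition point_of :: "op_path \<Rightarrow> 'a \<times> (nat \<Rightarrow> bool)" where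
  "point_of y = (decode (path_itinerary y), snd y)"

lemma measurable_point_of: "point_of \<in> TOP \<rightarrow>\<^sub>M (p \<Otimes>\<^sub>M bernoulli_seq)"
  unfolding point_of_def
proof (rule measurable_Pair)
  show "(\<lambda>y. decode (path_itinerary y)) \<in> TOP \<rightarrow>\<^sub>M p"
    using measurable_comp[OF measurable_path_itinerary decode(1)] by (simp add: comp_def measurable_p_iff)
qed (rule measurable_snd_TOP)

definition good_pairs :: "('a \<times> (nat \<Rightarrow> bool)) set" where
  "good_pairs = good_points \<times> {\<alpha>. nonconstant_tails \<alpha>}"

lemma point_of_path_of: "z \<in> good_pairs \<Longrightarrow> point_of (path_of z) = z"
  unfolding good_pairs_def point_of_def
  by (auto simp: path_itinerary_path_of decode_itinerary)

lemma good_pairs_in_sets: "good_pairs \<in> sets (p \<Otimes>\<^sub>M bernoulli_seq)"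
  unfolding good_pairs_def
  using good_points_in_sets nonconstant_tails_in_sets by (intro pair_measureI) simp_all

lemma AE_good_pairs: "AE z in p \<Otimes>\<^sub>M bernoulli_seq. z \<in> good_pairs"
proof -
  interpret p: prob_space p by (rule prob_space_p)
  interpret m: prob_space bernoulli_seq by (rule prob_space_bernoulli_seq)
  interpret pair_sigma_finite p bernoulli_seq ..
  have "AE x in p. AE \<alpha> in bernoulli_seq. (x, \<alpha>) \<in> good_pairs"
    using AE_good_points
  proof eventually_elim
    case (elim x)
    show ?case using AE_nonconstant_tails by eventually_elim (simp add: good_pairs_def elim)
  qed
  then show ?thesis
    using good_pairs_in_sets by (intro AE_pair_measure) (simp_all add: space_pair_measure)
qed

lemma good_pairs_T_odometer: "z \<in> good_pairs \<Longrightarrow> (\<lambda>(x, \<alpha>). (T x, odometer \<alpha>)) z \<in> good_pairs"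
  unfolding good_pairs_def using good_points_T nonconstant_tails_odometer by auto

definition path_measure :: "op_path measure" where
  "path_measure = distr (p \<Otimes>\<^sub>M bernoulli_seq) TOP path_of"

lemma sets_path_measure [measurable_cong]: "sets path_measure = sets TOP"
  unfolding path_measure_def by simp

lemma measurable_path_measure_iff:
  "measurable path_measure N = measurable TOP N" "measurable M path_measure = measurable M TOP"
  by (simp_all cong: measurable_cong_sets add: sets_path_measure)

lemma measure_preserving_path_of: "measure_preserving_map (p \<Otimes>\<^sub>M bernoulli_seq) path_measure path_of"
  unfolding measure_preserving_map_def measurable_path_measure_iff
  using measurable_path_of by (simp add: path_measure_def cong: distr_cong)

lemma central_measure_path_measure: "central_measure path_measure"
  unfolding central_measure_def
proof (intro conjI allI impI)
  show "prob_space path_measure"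
    unfolding path_measure_def by (rule prob_space.prob_space_distr[OF prob_space_product measurable_path_of])
  show "sets path_measure = sets TOP" by (rule sets_path_measure)
  fix n and a b :: "bool list" assume "length a = n \<and> length b = n"
  then have a: "length a = n" and b: "length b = n" by auto
  have swap: "OP_swap n a b \<in> TOP \<rightarrow>\<^sub>M path_measure"
    using measurable_OP_swap[OF a b] by (simp add: measurable_path_measure_iff)
  then show "OP_swap n a b \<in> path_measure \<rightarrow>\<^sub>M path_measure" by (simp add: measurable_path_measure_iff)
  have path_of: "path_of \<in> (p \<Otimes>\<^sub>M bernoulli_seq) \<rightarrow>\<^sub>M path_measure"
    using measure_preserving_path_of by (simp add: measure_preserving_map_def)
  have "distr path_measure path_measure (OP_swap n a b) =
      distr (p \<Otimes>\<^sub>M bernoulli_seq) path_measure (\<lambda>z. OP_swap n a b (path_of z))"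
    using distr_distr[OF swap measurable_path_of] by (simp add: path_measure_def comp_def)
  also have "\<dots> = distr (p \<Otimes>\<^sub>M bernoulli_seq) path_measure (\<lambda>z. path_of (swap_lift n a b z))"
  proof (rule distr_cong_AE[OF refl refl])
    show "AE z in p \<Otimes>\<^sub>M bernoulli_seq. OP_swap n a b (path_of z) = path_of (swap_lift n a b z)"
      using AE_good_pairs by eventually_elim
        (auto simp: good_pairs_def good_points_def OP_swap_path_of[OF _ a b])
    show "(\<lambda>z. OP_swap n a b (path_of z)) \<in> (p \<Otimes>\<^sub>M bernoulli_seq) \<rightarrow>\<^sub>M path_measure"
      using measurable_comp[OF measurable_path_of swap] by (simp add: comp_def)
    show "(\<lambda>z. path_of (swap_lift n a b z)) \<in> (p \<Otimes>\<^sub>M bernoulli_seq) \<rightarrow>\<^sub>M path_measure"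
      using measurable_comp[OF measurable_swap_lift path_of] by (simp add: comp_def)
  qed
  also have "\<dots> = distr (distr (p \<Otimes>\<^sub>M bernoulli_seq) (p \<Otimes>\<^sub>M bernoulli_seq) (swap_lift n a b)) path_measure path_of"
    using distr_distr[OF path_of measurable_swap_lift] by (simp add: comp_def)
  also have "\<dots> = path_measure"
    using measure_preserving_path_of by (simp add: distr_swap_lift[OF a b] measure_preserving_map_def)
  finally show "distr path_measure path_measure (OP_swap n a b) = path_measure" .
qed

lemma adic_path_of_good_pair:
  assumes "(x, \<alpha>) \<in> good_pairs"
  shows "adic (path_of (x, \<alpha>)) = path_of (T x, odometer \<alpha>)"
proof -
  have "x \<in> invertible_points"
    using assms stable_point_invertible unfolding good_pairs_def good_points_def by auto
  moreover obtain n where "\<not> \<alpha> n"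
    using assms unfolding good_pairs_def nonconstant_tails_def by auto
  then have "\<not> \<alpha> (LEAST n. \<not> \<alpha> n)" by (rule LeastI)
  moreover have "\<And>j. j < (LEAST n. \<not> \<alpha> n) \<Longrightarrow> \<alpha> j" using not_less_Least by blast
  ultimately show ?thesis by (rule adic_path_of)
qed

definition good_paths :: "op_path set" where
  "good_paths = {y \<in> OP_paths. point_of y \<in> good_pairs \<and> path_of (point_of y) = y}"

lemma good_paths_in_sets: "good_paths \<in> sets TOP"
proof -
  have "(\<lambda>y. path_of (point_of y)) \<in> TOP \<rightarrow>\<^sub>M TOP"
    using measurable_comp[OF measurable_point_of measurable_path_of] by (simp add: comp_def)
  from fixpoints_in_sets_TOP[OF this]
  have "{y \<in> OP_paths. path_of (point_of y) = y} \<in> sets TOP" .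
  moreover have "point_of -` good_pairs \<inter> space TOP \<in> sets TOP"
    by (rule measurable_sets[OF measurable_point_of good_pairs_in_sets])
  moreover have "good_paths = (point_of -` good_pairs \<inter> space TOP) \<inter> {y \<in> OP_paths. path_of (point_of y) = y}"
    unfolding good_paths_def by auto
  ultimately show ?thesis by simp
qed

lemma path_of_good_pair: "z \<in> good_pairs \<Longrightarrow> path_of z \<in> good_paths"
  unfolding good_paths_def using point_of_path_of path_of_in_OP_paths[of "fst z" "snd z"] by simp

lemma null_not_good_pairs:
  "emeasure (p \<Otimes>\<^sub>M bernoulli_seq) (space (p \<Otimes>\<^sub>M bernoulli_seq) - good_pairs) = 0"
  using AE_good_pairs good_pairs_in_sets by (subst (asm) AE_iff_measurable) (auto simp: set_diff_eq)

lemma null_not_good_paths: "emeasure path_measure (space path_measure - good_paths) = 0"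
proof -
  have "space path_measure - good_paths \<in> sets TOP"
    using sets.compl_sets[OF good_paths_in_sets] by (simp add: path_measure_def)
  then have "emeasure path_measure (space path_measure - good_paths) =
      emeasure (p \<Otimes>\<^sub>M bernoulli_seq) (path_of -` (space path_measure - good_paths) \<inter> space (p \<Otimes>\<^sub>M bernoulli_seq))"
    unfolding path_measure_def by (simp add: emeasure_distr[OF measurable_path_of])
  also have "\<dots> \<le> emeasure (p \<Otimes>\<^sub>M bernoulli_seq) (space (p \<Otimes>\<^sub>M bernoulli_seq) - good_pairs)"
  proof (rule emeasure_mono)
    show "path_of -` (space path_measure - good_paths) \<inter> space (p \<Otimes>\<^sub>M bernoulli_seq)
        \<subseteq> space (p \<Otimes>\<^sub>M bernoulli_seq) - good_pairs"
      using path_of_good_pair by blast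
  qed (use good_pairs_in_sets in auto)
  finally show ?thesis using null_not_good_pairs by simp
qed

lemma measure_preserving_point_of: "measure_preserving_map path_measure (p \<Otimes>\<^sub>M bernoulli_seq) point_of"
  unfolding measure_preserving_map_def
proof
  show point_of: "point_of \<in> path_measure \<rightarrow>\<^sub>M (p \<Otimes>\<^sub>M bernoulli_seq)"
    using measurable_point_of by (simp add: measurable_path_measure_iff)
  have "distr path_measure (p \<Otimes>\<^sub>M bernoulli_seq) point_of =
      distr (p \<Otimes>\<^sub>M bernoulli_seq) (p \<Otimes>\<^sub>M bernoulli_seq) (\<lambda>z. point_of (path_of z))"
    unfolding path_measure_def using distr_distr[OF measurable_point_of measurable_path_of]
    by (simp add: comp_def)
  also have "\<dots> = distr (p \<Otimes>\<^sub>M bernoulli_seq) (p \<Otimes>\<^sub>M bernoulli_seq) (\<lambda>z. z)"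
    using AE_good_pairs point_of_path_of measurable_comp[OF measurable_path_of measurable_point_of]
    by (intro distr_cong_AE) (auto elim!: eventually_mono simp: comp_def)
  finally show "distr path_measure (p \<Otimes>\<^sub>M bernoulli_seq) point_of = p \<Otimes>\<^sub>M bernoulli_seq"
    by simp
qed

lemma metrically_isomorphic_path_measure:
  "metrically_isomorphic path_measure adic (p \<Otimes>\<^sub>M bernoulli_seq) (\<lambda>(x, \<alpha>). (T x, odometer \<alpha>))"
  unfolding metrically_isomorphic_def
proof (intro exI conjI ballI)
  show "good_paths \<in> sets path_measure" using good_paths_in_sets by (simp add: sets_path_measure)
  fix y assume "y \<in> good_paths"
  then obtain x \<alpha> where y: "point_of y = (x, \<alpha>)" "(x, \<alpha>) \<in> good_pairs" "path_of (x, \<alpha>) = y"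
    unfolding good_paths_def by (cases "point_of y") auto
  then show "point_of (adic y) = (\<lambda>(x, \<alpha>). (T x, odometer \<alpha>)) (point_of y)"
    using adic_path_of_good_pair good_pairs_T_odometer point_of_path_of by fastforce
qed (use good_pairs_in_sets null_not_good_pairs null_not_good_paths measure_preserving_point_of
      measure_preserving_path_of point_of_path_of path_of_good_pair
      in \<open>auto simp: good_paths_def\<close>)

end

theorem theorem2:
  fixes p :: "'a::polish_space measure" and T :: "'a \<Rightarrow> 'a" and P :: "'a set"
  assumes "prob_space p"
    and "sets p = sets borel"
    and "mp_automorphism p T"
    and "binomial_generator p T P"
  shows "\<exists>\<mu>. central_measure \<mu> \<and>
           metrically_isomorphic \<mu> adic (p \<Otimes>\<^sub>M bernoulli_seq) (\<lambda>(x, \<alpha>). (T x, odometer \<alpha>))"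
proof -
  obtain T' where "binomial_generated p T T' P"
    using assms unfolding mp_automorphism_def binomial_generator_def binomial_generated_def by blast
  then interpret binomial_generated p T T' P .
  show ?thesis using central_measure_path_measure metrically_isomorphic_path_measure by blast
qed

end
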